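(* Let $K$ be a field of characteristic $0$, $n\ge2$, and let $f\in K[[x_1,\dots,x_n]]$ be D-finite over $K(x_1,\dots,x_n)$. For each $i$ fix a non-zero $L_i\in K[x_1,\dots,x_n]\langle D_{x_i}\rangle$ with $L_i(f)=0$, of order $r_i$ and degree $d_i$; let $r_f=\max_ir_i$ and $d_f=\max_id_i$. Let $T=x_1D_{x_1}-x_2D_{x_2}$ and $D_{x_1,x_2}=D_{x_1}D_{x_2}$ in the Weyl algebra. Then there exists a non-zero operator $P$ with $P(f)=0$ lying in the subalgebra $K[x_3,\dots,x_n][x_1x_2]\langle T,D_{x_1,x_2}\rangle$, such that, writing $P=\sum c_{i,j,\ell}(x_3,\dots,x_n)(x_1x_2)^iT^jD_{x_1,x_2}^\ell$ with $c_{i,j,\ell}\in K[x_3,\dots,x_n]$, $P$ has degree $O(d_f^2r_f^2)$ in $x_1x_2$, total degree $O(d_f^9r_f^8)$ in $x_3,\dots,x_n$, and total degree $O(d_f^2r_f^2)$ in $T,D_{x_1,x_2}$; and for each $h\in\{3,\dots,n\}$ there exists a non-zero operator $Q_h$ with $Q_h(f)=0$ lying in $K[x_3,\dots,x_n][x_1x_2]\langle T,D_{x_h}\rangle$, of degree $O(d_f^2r_f^3)$ in $x_1x_2$, total degree $O(d_f^9r_f^{12})$ in $x_3,\dots,x_n$, and total degree $O(d_f^2r_f^3)$ in $T,D_{x_h}$.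
   Context: A series $g\in K[[x_1,\dots,x_n]]$ is D-finite over $K(x_1,\dots,x_n)$ if the $K(x_1,\dots,x_n)$-vector space spanned by all its partial derivatives in $K(x_1,\dots,x_n)\otimes_{K[x_1,\dots,x_n]}K[[x_1,\dots,x_n]]$ is finite-dimensional. The Weyl algebra $W_n=K[x_1,\dots,x_n]\langle D_{x_1},\dots,D_{x_n}\rangle$ has $D_{x_i}a=aD_{x_i}+\partial a/\partial x_i$. For $L=\sum_{j=0}^r\ell_jD_{x_i}^j$ with $\ell_r\ne0$, order is $r$ and degree is the maximal total degree of the $\ell_j$. The subalgebra $K[x_3,\dots,x_n][x_1x_2]\langle T,D_{x_1,x_2}\rangle$ is the $K$-subalgebra of $W_n$ generated by $x_1x_2,x_3,\dots,x_n,T,D_{x_1,x_2}$; its elements $(x_1x_2)^ix_3^{k_3}\cdots x_n^{k_n}T^jD_{x_1,x_2}^\ell$ form a $K$-basis, which gives the degree notions used (similarly for $T,D_{x_h}$). The $O(\cdot)$ bounds are as functions of $d_f$ and $r_f$. *)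

theory Defs
  imports Main
begin

text \<open>Variables x_1,...,x_n are indexed 0,...,n-1.  A monomial / exponent vector is a
function nat => nat vanishing at indices >= n.  A power series in K[[x_1..x_n]] is its
coefficient function on exponent vectors (normalised to vanish on non-exponent vectors);
a polynomial is a power series with finite support.\<close>

definition expvecs :: "nat \<Rightarrow> (nat \<Rightarrow> nat) set" where
  "expvecs n = {m. \<forall>v\<ge>n. m v = 0}"

definition is_series :: "nat \<Rightarrow> ((nat \<Rightarrow> nat) \<Rightarrow> 'a::zero) \<Rightarrow> bool" where
  "is_series n g \<longleftrightarrow> (\<forall>m. m \<notin> expvecs n \<longrightarrow> g m = 0)"

definition is_poly :: "nat \<Rightarrow> ((nat \<Rightarrow> nat) \<Rightarrow> 'a::zero) \<Rightarrow> bool" where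
  "is_poly n p \<longleftrightarrow> is_series n p \<and> finite {m. p m \<noteq> 0}"

definition mdeg :: "nat \<Rightarrow> (nat \<Rightarrow> nat) \<Rightarrow> nat" where
  "mdeg n m = (\<Sum>v<n. m v)"

definition tdeg :: "nat \<Rightarrow> ((nat \<Rightarrow> nat) \<Rightarrow> 'a::zero) \<Rightarrow> nat" where
  "tdeg n p = Max ({mdeg n m | m. p m \<noteq> 0} \<union> {0})"

definition dvar :: "nat \<Rightarrow> ((nat \<Rightarrow> nat) \<Rightarrow> 'a::semiring_1) \<Rightarrow> (nat \<Rightarrow> nat) \<Rightarrow> 'a" where
  "dvar v g = (\<lambda>m. of_nat (m v + 1) * g (m(v := m v + 1)))"

definition xvar :: "nat \<Rightarrow> ((nat \<Rightarrow> nat) \<Rightarrow> 'a::zero) \<Rightarrow> (nat \<Rightarrow> nat) \<Rightarrow> 'a" where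
  "xvar v g = (\<lambda>m. if m v = 0 then 0 else g (m(v := m v - 1)))"

definition xmon :: "(nat \<Rightarrow> nat) \<Rightarrow> ((nat \<Rightarrow> nat) \<Rightarrow> 'a::zero) \<Rightarrow> (nat \<Rightarrow> nat) \<Rightarrow> 'a" where
  "xmon k g = (\<lambda>m. if k \<le> m then g (\<lambda>v. m v - k v) else 0)"

definition pmult :: "((nat \<Rightarrow> nat) \<Rightarrow> 'a::semiring_1) \<Rightarrow> ((nat \<Rightarrow> nat) \<Rightarrow> 'a) \<Rightarrow> (nat \<Rightarrow> nat) \<Rightarrow> 'a" where
  "pmult p g = (\<lambda>m. \<Sum>a\<in>{a. a \<le> m}. p a * g (\<lambda>v. m v - a v))"

fun pder :: "nat \<Rightarrow> (nat \<Rightarrow> nat) \<Rightarrow> ((nat \<Rightarrow> nat) \<Rightarrow> 'a::semiring_1) \<Rightarrow> (nat \<Rightarrow> nat) \<Rightarrow> 'a" where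
  "pder 0 \<beta> g = g"
| "pder (Suc k) \<beta> g = (dvar k ^^ \<beta> k) (pder k \<beta> g)"

text \<open>D-finiteness: the K(x)-span of all partial derivatives of f in
K(x) \<otimes> K[[x]] is finite-dimensional, i.e. there is N such that any N+1 partial
derivatives are linearly dependent over K(x), equivalently (clearing denominators,
K[[x]] being a domain) over K[x].\<close>
definition dfinite :: "nat \<Rightarrow> ((nat \<Rightarrow> nat) \<Rightarrow> 'a::field) \<Rightarrow> bool" where
  "dfinite n f \<longleftrightarrow> (\<exists>N. \<forall>\<beta> :: nat \<Rightarrow> (nat \<Rightarrow> nat). (\<forall>k\<le>N. \<beta> k \<in> expvecs n) \<longrightarrow>
     (\<exists>p. (\<forall>k\<le>N. is_poly n (p k)) \<and> (\<exists>k\<le>N. p k \<noteq> (\<lambda>_. 0)) \<and>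
          (\<forall>m\<in>expvecs n. (\<Sum>k\<le>N. pmult (p k) (pder n (\<beta> k) f) m) = 0)))"

text \<open>An operator L = sum_j l_j D_{x_i}^j in K[x]<D_{x_i}> is given by its coefficient
polynomials l :: nat => poly.\<close>
definition ore_op :: "nat \<Rightarrow> (nat \<Rightarrow> (nat \<Rightarrow> nat) \<Rightarrow> 'a::zero) \<Rightarrow> bool" where
  "ore_op n l \<longleftrightarrow> finite {j. l j \<noteq> (\<lambda>_. 0)} \<and> (\<forall>j. is_poly n (l j))"

definition op_order :: "(nat \<Rightarrow> (nat \<Rightarrow> nat) \<Rightarrow> 'a::zero) \<Rightarrow> nat" where
  "op_order l = Max ({j. l j \<noteq> (\<lambda>_. 0)} \<union> {0})"

definition op_degree :: "nat \<Rightarrow> (nat \<Rightarrow> (nat \<Rightarrow> nat) \<Rightarrow> 'a::zero) \<Rightarrow> nat" where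
  "op_degree n l = Max ({tdeg n (l j) | j. l j \<noteq> (\<lambda>_. 0)} \<union> {0})"

definition apply_ore :: "nat \<Rightarrow> (nat \<Rightarrow> (nat \<Rightarrow> nat) \<Rightarrow> 'a::semiring_1) \<Rightarrow>
    ((nat \<Rightarrow> nat) \<Rightarrow> 'a) \<Rightarrow> (nat \<Rightarrow> nat) \<Rightarrow> 'a" where
  "apply_ore i l g = (\<lambda>m. \<Sum>j\<in>{j. l j \<noteq> (\<lambda>_. 0)}. pmult (l j) ((dvar i ^^ j) g) m)"

definition Top :: "((nat \<Rightarrow> nat) \<Rightarrow> 'a::ring_1) \<Rightarrow> (nat \<Rightarrow> nat) \<Rightarrow> 'a" where
  "Top g = (\<lambda>m. xvar 0 (dvar 0 g) m - xvar 1 (dvar 1 g) m)"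

definition D12 :: "((nat \<Rightarrow> nat) \<Rightarrow> 'a::semiring_1) \<Rightarrow> (nat \<Rightarrow> nat) \<Rightarrow> 'a" where
  "D12 g = dvar 0 (dvar 1 g)"

text \<open>Elements of K[x_3..x_n][x_1x_2]<T, D> (D = D_{x_1,x_2} or D_{x_h}) are given by
their coordinates c(i,k,j,l) in the basis (x_1x_2)^i x^k T^j D^l, where k is an exponent
vector in x_3..x_n (indices 2..n-1).\<close>
definition basis_act :: "(((nat \<Rightarrow> nat) \<Rightarrow> 'a::ring_1) \<Rightarrow> (nat \<Rightarrow> nat) \<Rightarrow> 'a) \<Rightarrow>
    nat \<times> (nat \<Rightarrow> nat) \<times> nat \<times> nat \<Rightarrow> ((nat \<Rightarrow> nat) \<Rightarrow> 'a) \<Rightarrow> (nat \<Rightarrow> nat) \<Rightarrow> 'a" where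
  "basis_act D t g = (case t of (i, k, j, l) \<Rightarrow>
      ((xvar 0 \<circ> xvar 1) ^^ i) (xmon k ((Top ^^ j) ((D ^^ l) g))))"

definition sub_coeffs :: "nat \<Rightarrow> (nat \<times> (nat \<Rightarrow> nat) \<times> nat \<times> nat \<Rightarrow> 'a::zero) \<Rightarrow> bool" where
  "sub_coeffs n c \<longleftrightarrow> finite {t. c t \<noteq> 0} \<and>
     (\<forall>i k j l. c (i, k, j, l) \<noteq> 0 \<longrightarrow> k \<in> expvecs n \<and> k 0 = 0 \<and> k 1 = 0)"

definition sub_apply :: "(((nat \<Rightarrow> nat) \<Rightarrow> 'a::ring_1) \<Rightarrow> (nat \<Rightarrow> nat) \<Rightarrow> 'a) \<Rightarrow>
    (nat \<times> (nat \<Rightarrow> nat) \<times> nat \<times> nat \<Rightarrow> 'a) \<Rightarrow> ((nat \<Rightarrow> nat) \<Rightarrow> 'a) \<Rightarrow> (nat \<Rightarrow> nat) \<Rightarrow> 'a" where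
  "sub_apply D c g = (\<lambda>m. \<Sum>t\<in>{t. c t \<noteq> 0}. c t * basis_act D t g m)"

definition sub_bounds :: "nat \<Rightarrow> (nat \<times> (nat \<Rightarrow> nat) \<times> nat \<times> nat \<Rightarrow> 'a::zero) \<Rightarrow>
    nat \<Rightarrow> nat \<Rightarrow> nat \<Rightarrow> bool" where
  "sub_bounds n c B1 B2 B3 \<longleftrightarrow>
     (\<forall>i k j l. c (i, k, j, l) \<noteq> 0 \<longrightarrow> i \<le> B1 \<and> mdeg n k \<le> B2 \<and> j + l \<le> B3)"

end

theory Submission
  imports Defs "HOL-Library.Function_Algebras" "HOL-Library.FuncSet" Complex_Main
begin

text \<open>
  Let \<open>r\<^sub>i\<close> be the order of \<open>L\<^sub>i\<close> and \<open>lc\<^sub>i\<close> its leading coefficient.  Read as a rewrite rule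
  for its leading term and differentiated, \<open>L\<^sub>i f = 0\<close> expresses \<open>lc\<^sub>i D\<^sup>\<delta> f\<close>, whenever
  \<open>\<delta>\<^sub>i \<ge> r\<^sub>i\<close>, through derivatives \<open>D\<^sup>\<delta>\<^sup>' f\<close> with \<open>\<delta>' < \<delta>\<close> and coefficients of degree \<open>\<le> d\<close>.
  So for a set \<open>H\<close> of variables (\<open>{x\<^sub>1, x\<^sub>2}\<close>, resp. \<open>{x\<^sub>1, x\<^sub>2, x\<^sub>h}\<close>) and \<open>\<Lambda>\<close> the
  product of the \<open>lc\<^sub>i\<close>, \<open>i \<in> H\<close>, a power of \<open>\<Lambda>\<close> times \<open>D\<^sup>\<delta> f\<close> is a polynomial
  combination of the finitely many \<open>D\<^sup>\<epsilon> f\<close> with \<open>\<epsilon>\<^sub>i < r\<^sub>i\<close> (\<open>i \<in> H\<close>).  Applying the operators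
  \<open>(x\<^sub>1x\<^sub>2)\<^sup>i x\<^sup>k T\<^sup>j D\<^sup>l\<close> with \<open>i \<le> a\<close>, \<open>k\<^sub>v \<le> B\<close>, \<open>j, l \<le> b\<close> to \<open>f\<close> and multiplying by a fixed power
  of \<open>\<Lambda>\<close> therefore lands in a space spanned by explicitly fewer elements than there are such
  operators.  A linear dependency gives a nonzero \<open>P\<close> with \<open>\<Lambda>\<^sup>N P(f) = 0\<close>, hence \<open>P(f) = 0\<close>
  as power series have no zero divisors; the parameters \<open>a, B, b\<close> are the degree bounds of \<open>P\<close>.
\<close>

section \<open>Coefficient functions and basic operators\<close>

definition fscale :: "'a::field \<Rightarrow> ('b \<Rightarrow> 'a) \<Rightarrow> 'b \<Rightarrow> 'a" where
  "fscale c g = (\<lambda>m. c * g m)"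

interpretation fs: vector_space "fscale :: 'a::field \<Rightarrow> ('b \<Rightarrow> 'a) \<Rightarrow> _"
  by unfold_locales (auto simp: fscale_def fun_eq_iff algebra_simps)

interpretation fsp: vector_space_pair
  "fscale :: 'a::field \<Rightarrow> ('b \<Rightarrow> 'a) \<Rightarrow> _" "fscale :: 'a::field \<Rightarrow> ('c \<Rightarrow> 'a) \<Rightarrow> _" ..

abbreviation flinear :: "(('b \<Rightarrow> 'a::field) \<Rightarrow> 'b \<Rightarrow> 'a) \<Rightarrow> bool" where
  "flinear \<equiv> Vector_Spaces.linear fscale fscale"

lemma flinearI:
  "(\<And>x y. \<phi> (x + y) = \<phi> x + \<phi> y) \<Longrightarrow> (\<And>c x. \<phi> (fscale c x) = fscale c (\<phi> x)) \<Longrightarrow> flinear \<phi>"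
  by (simp add: Vector_Spaces.linear_iff fs.vector_space_axioms)

lemma flinear_comp: "flinear \<phi> \<Longrightarrow> flinear \<psi> \<Longrightarrow> flinear (\<lambda>g. \<phi> (\<psi> g))"
  using Vector_Spaces.linear_compose[of fscale fscale \<psi> fscale \<phi>] by (simp add: comp_def)

lemma fscale_apply: "fscale c g m = c * g m"
  by (simp add: fscale_def)

lemma sum_fun_apply: "(\<Sum>x\<in>A. f x) m = (\<Sum>x\<in>A. f x m)"
  by (induction A rule: infinite_finite_induct) auto

definition unit_exp :: "nat \<Rightarrow> nat \<Rightarrow> nat" where
  "unit_exp v = (\<lambda>u. if u = v then 1 else 0)"

lemma unit_exp_upd: "\<delta>(j := \<delta> j + 1) = \<delta> + unit_exp j"
  by (auto simp: unit_exp_def fun_eq_iff)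

lemma xmon_add: "xmon a (xmon b g) = xmon (a + b) g"
proof (rule ext)
  fix m :: "nat \<Rightarrow> nat"
  have "a + b \<le> m \<longleftrightarrow> a \<le> m \<and> b \<le> (\<lambda>v. m v - a v)"
    by (auto simp: le_fun_def) (metis add.commute le_diff_conv2 le_add2 add_leD2)+
  moreover have "(\<lambda>v. (m v - a v) - b v) = (\<lambda>v. m v - (a + b) v)" by auto
  ultimately show "xmon a (xmon b g) m = xmon (a + b) g m" by (simp add: xmon_def)
qed

lemma xmon_zero [simp]: "xmon (\<lambda>_. 0) g = g"
  by (simp add: xmon_def fun_eq_iff le_fun_def)

lemma xvar_eq_xmon: "xvar v = xmon (unit_exp v)"
proof (intro ext)
  fix g :: "(nat \<Rightarrow> nat) \<Rightarrow> 'a" and m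
  have "unit_exp v \<le> m \<longleftrightarrow> m v \<noteq> 0" by (auto simp: unit_exp_def le_fun_def)
  moreover have "(\<lambda>u. m u - unit_exp v u) = m(v := m v - 1)" by (auto simp: unit_exp_def)
  ultimately show "xvar v g m = xmon (unit_exp v) g m" by (simp add: xvar_def xmon_def)
qed

lemma upd_pred_le_iff:
  fixes a m :: "nat \<Rightarrow> nat"
  shows "a(j := a j - 1) \<le> m \<longleftrightarrow> a \<le> m(j := m j + 1) \<or> a j = 0 \<and> a \<le> m"
proof -
  have "a(j := a j - 1) \<le> m \<longleftrightarrow> (\<forall>v. v \<noteq> j \<longrightarrow> a v \<le> m v) \<and> a j \<le> m j + 1"
    by (auto simp: le_fun_def)
  moreover have "a \<le> m(j := m j + 1) \<longleftrightarrow> (\<forall>v. v \<noteq> j \<longrightarrow> a v \<le> m v) \<and> a j \<le> m j + 1"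
    by (auto simp: le_fun_def)
  moreover have "a \<le> m \<longleftrightarrow> (\<forall>v. v \<noteq> j \<longrightarrow> a v \<le> m v) \<and> a j \<le> m j"
    by (auto simp: le_fun_def)
  ultimately show ?thesis by auto
qed

lemma dvar_xmon:
  "dvar j (xmon a g) = xmon a (dvar j g) + fscale (of_nat (a j)) (xmon (a(j := a j - 1)) g)"
proof (rule ext)
  fix m :: "nat \<Rightarrow> nat"
  define m' where "m' = m(j := m j + 1)"
  define a' where "a' = a(j := a j - 1)"
  have shift: "(\<lambda>v. m' v - a v) = (\<lambda>v. m v - a v)(j := m j - a j + 1)" if "a \<le> m"
    using le_funD[OF that, of j] by (auto simp: m'_def fun_eq_iff)
  have shift': "(\<lambda>v. m v - a' v) = (\<lambda>v. m' v - a v)" if "a' \<le> m" "a j \<noteq> 0"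
    using le_funD[OF that(1), of j] that(2) by (auto simp: m'_def a'_def fun_eq_iff)
  have le': "a \<le> m'" if "a \<le> m" using that by (auto simp: m'_def le_fun_def le_SucI)
  have a'_le_iff: "a' \<le> m \<longleftrightarrow> a \<le> m' \<or> a j = 0 \<and> a \<le> m"
    unfolding a'_def m'_def by (rule upd_pred_le_iff)
  then have a'_le: "a' \<le> m \<longleftrightarrow> a \<le> m'" if "a j \<noteq> 0" using that by simp
  have val: "dvar j (xmon a g) m = of_nat (m j + 1) * (if a \<le> m' then g (\<lambda>v. m' v - a v) else 0)"
    "xmon a (dvar j g) m = (if a \<le> m then of_nat (m j - a j + 1) * g ((\<lambda>v. m v - a v)(j := m j - a j + 1)) else 0)"
    "fscale (of_nat (a j)) (xmon a' g) m = of_nat (a j) * (if a' \<le> m then g (\<lambda>v. m v - a' v) else 0)"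
    by (simp_all add: dvar_def xmon_def fscale_def m'_def)
  consider (inside) "a \<le> m" | (edge) "\<not> a \<le> m" "a \<le> m'" | (outside) "\<not> a \<le> m'"
    using le' by blast
  then show "dvar j (xmon a g) m = (xmon a (dvar j g) + fscale (of_nat (a j)) (xmon a' g)) m"
  proof cases
    case inside
    then have "of_nat (m j + 1) = (of_nat (m j - a j + 1) + of_nat (a j) :: 'a)"
      using le_funD[OF inside, of j] by (simp flip: of_nat_add)
    then show ?thesis using inside val le' shift shift' a'_le by (cases "a j = 0") (simp_all add: distrib_right)
  next
    case edge
    obtain v where v: "\<not> a v \<le> m v" using edge(1) by (auto simp: le_fun_def)
    have "v = j"
    proof (rule ccontr)
      assume "v \<noteq> j"
      then show False using v le_funD[OF edge(2), of v] by (simp add: m'_def)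
    qed
    then have "a j = m j + 1" using v le_funD[OF edge(2), of j] by (simp add: m'_def)
    then show ?thesis using edge val shift' a'_le by simp
  next
    case outside
    then have "\<not> a \<le> m" "\<not> a' \<le> m" using le' a'_le_iff by auto
    then show ?thesis using outside val by simp
  qed
qed

lemma dvar_commute:
  "dvar i (dvar j g) = dvar j (dvar i (g :: (nat \<Rightarrow> nat) \<Rightarrow> 'a::comm_semiring_1))"
proof (cases "i = j")
  case False
  show ?thesis
  proof (rule ext)
    fix m :: "nat \<Rightarrow> nat"
    have "m(i := Suc (m i), j := Suc (m j)) = m(j := Suc (m j), i := Suc (m i))"
      using False by (rule fun_upd_twist)
    then show "dvar i (dvar j g) m = dvar j (dvar i g) m"
      using False by (simp add: dvar_def) (rule mult.left_commute)
  qed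
qed simp

lemma dvar_funpow_commute:
  "dvar i ((dvar j ^^ p) g) = (dvar j ^^ p) (dvar i (g :: (nat \<Rightarrow> nat) \<Rightarrow> 'a::comm_semiring_1))"
proof (induction p)
  case (Suc p)
  have "dvar i (dvar j ((dvar j ^^ p) g)) = dvar j (dvar i ((dvar j ^^ p) g))" by (rule dvar_commute)
  then show ?case by (simp add: Suc.IH)
qed simp

lemma pder_cong: "(\<And>v. v < k \<Longrightarrow> \<delta> v = \<delta>' v) \<Longrightarrow> pder k \<delta> g = pder k \<delta>' g"
  by (induction k) auto

lemma pder_zero [simp]: "pder k (\<lambda>_. 0) g = g"
  by (induction k) auto

lemma dvar_pder:
  "i < k \<Longrightarrow> dvar i (pder k \<delta> g) = pder k (\<delta>(i := \<delta> i + 1)) (g :: (nat \<Rightarrow> nat) \<Rightarrow> 'a::comm_semiring_1)"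
proof (induction k)
  case (Suc k)
  show ?case
  proof (cases "i = k")
    case True
    have e: "pder k (\<delta>(i := \<delta> i + 1)) g = pder k \<delta> g" using True by (intro pder_cong) auto
    have "dvar i (pder (Suc k) \<delta> g) = (dvar k ^^ Suc (\<delta> k)) (pder k \<delta> g)"
      using True by (simp add: funpow_swap1)
    also have "\<dots> = pder (Suc k) (\<delta>(i := \<delta> i + 1)) g"
      using True e by simp
    finally show ?thesis .
  next
    case False
    then show ?thesis using Suc by (simp add: dvar_funpow_commute)
  qed
qed simp

lemma funpow_dvar_eq_pder:
  "i < n \<Longrightarrow> (dvar i ^^ j) g = pder n ((\<lambda>_. 0)(i := j)) (g :: (nat \<Rightarrow> nat) \<Rightarrow> 'a::comm_semiring_1)"
proof (induction j)
  case (Suc j)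
  have e: "((\<lambda>_. 0)(i := j))(i := ((\<lambda>_. 0)(i := j)) i + 1) = (\<lambda>_. 0::nat)(i := Suc j)" by simp
  have "(dvar i ^^ Suc j) g = dvar i (pder n ((\<lambda>_. 0)(i := j)) g)"
    by (simp only: funpow.simps(2) comp_apply Suc.IH[OF Suc.prems])
  also have "\<dots> = pder n ((\<lambda>_. 0)(i := Suc j)) g" unfolding dvar_pder[OF Suc.prems] e ..
  finally show ?case .
qed (simp add: fun_upd_def)

lemma flinear_xmon: "flinear (xmon a)"
  by (rule flinearI) (auto simp: xmon_def fun_eq_iff fscale_def)

lemma flinear_dvar: "flinear (dvar j)"
  by (rule flinearI) (auto simp: dvar_def fun_eq_iff fscale_def algebra_simps)

lemma Top_eq_xmon: "Top g = xmon (unit_exp 0) (dvar 0 g) - xmon (unit_exp 1) (dvar 1 g)"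
  by (simp add: Top_def xvar_eq_xmon fun_eq_iff)

text \<open>Agrees with \<open>pmult\<close> on exponent vectors (\<open>pmult_eq_poly_times\<close>).  Off them \<open>pmult\<close> sums over
  the infinite set \<open>{a. a \<le> m}\<close> and is junk, so only this variant commutes with the other
  operators everywhere.\<close>
definition poly_times :: "((nat \<Rightarrow> nat) \<Rightarrow> 'a::field) \<Rightarrow> ((nat \<Rightarrow> nat) \<Rightarrow> 'a) \<Rightarrow> (nat \<Rightarrow> nat) \<Rightarrow> 'a" where
  "poly_times p g = (\<lambda>m. \<Sum>a\<in>{a. p a \<noteq> 0}. p a * xmon a g m)"

lemma poly_times_eq_sum: "poly_times p g = (\<Sum>a\<in>{a. p a \<noteq> 0}. fscale (p a) (xmon a g))"
  by (simp add: poly_times_def fun_eq_iff sum_fun_apply fscale_apply)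

lemma flinear_poly_times: "flinear (poly_times p)"
proof (rule flinearI)
  show "poly_times p (x + y) = poly_times p x + poly_times p y" for x y
    by (simp add: poly_times_eq_sum fsp.linear_add[OF flinear_xmon] fs.scale_right_distrib sum.distrib)
  show "poly_times p (fscale c x) = fscale c (poly_times p x)" for c x
    by (simp add: poly_times_eq_sum fsp.linear_scale[OF flinear_xmon] fs.scale_sum_right mult.commute)
qed

lemma xmon_poly_times: "xmon a (poly_times p g) = poly_times p (xmon a g)"
  by (simp add: poly_times_eq_sum fsp.linear_sum[OF flinear_xmon] fsp.linear_scale[OF flinear_xmon]
      xmon_add add.commute)

lemma poly_times_commute: "poly_times p (poly_times q g) = poly_times q (poly_times p g)"
proof -
  have "poly_times p (poly_times q g) =
      (\<Sum>b\<in>{b. q b \<noteq> 0}. \<Sum>a\<in>{a. p a \<noteq> 0}. fscale (q b * p a) (xmon (a + b) g))"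
    by (simp add: poly_times_eq_sum[of q] fsp.linear_sum[OF flinear_poly_times]
        fsp.linear_scale[OF flinear_poly_times] poly_times_eq_sum[of p] xmon_add fs.scale_sum_right)
  also have "\<dots> = (\<Sum>a\<in>{a. p a \<noteq> 0}. \<Sum>b\<in>{b. q b \<noteq> 0}. fscale (p a * q b) (xmon (b + a) g))"
    by (subst sum.swap) (simp add: mult.commute add.commute)
  also have "\<dots> = poly_times q (poly_times p g)"
    by (simp add: poly_times_eq_sum[of p] fsp.linear_sum[OF flinear_poly_times]
        fsp.linear_scale[OF flinear_poly_times] poly_times_eq_sum[of q] xmon_add fs.scale_sum_right)
  finally show ?thesis .
qed

lemma dvar_poly_times:
  "dvar j (poly_times p g) = poly_times p (dvar j g) +
     (\<Sum>a\<in>{a. p a \<noteq> 0}. fscale (p a * of_nat (a j)) (xmon (a(j := a j - 1)) g))"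
  by (simp add: poly_times_eq_sum fsp.linear_sum[OF flinear_dvar] fsp.linear_scale[OF flinear_dvar]
      dvar_xmon fs.scale_right_distrib sum.distrib)

section \<open>Exponent vectors; power series have no zero divisors\<close>

lemma mdeg_add: "mdeg n (a + b) = mdeg n a + mdeg n b"
  by (simp add: mdeg_def sum.distrib)

lemma mdeg_mono: "a \<le> b \<Longrightarrow> mdeg n a \<le> mdeg n b"
  unfolding mdeg_def le_fun_def by (simp add: sum_mono)

lemma mdeg_unit_exp: "j < n \<Longrightarrow> mdeg n (unit_exp j) = 1"
  unfolding mdeg_def unit_exp_def by (simp add: sum.delta)

lemma expvecs_le:
  assumes "m \<in> expvecs n" "a \<le> m" shows "a \<in> expvecs n"
  unfolding expvecs_def
proof (intro CollectI allI impI)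
  fix v assume "n \<le> v"
  then have "m v = 0" using assms(1) by (simp add: expvecs_def)
  then show "a v = 0" using le_funD[OF assms(2), of v] by simp
qed

lemma expvecs_add: "a \<in> expvecs n \<Longrightarrow> b \<in> expvecs n \<Longrightarrow> a + b \<in> expvecs n"
  unfolding expvecs_def by simp

lemma le_mdeg: "a \<in> expvecs n \<Longrightarrow> a v \<le> mdeg n a"
proof (cases "v < n")
  case True
  then show ?thesis unfolding mdeg_def by (intro member_le_sum) auto
qed (simp add: expvecs_def)

lemma card_funs_le:
  assumes D: "finite D" and T: "\<And>v. v \<in> D \<Longrightarrow> finite (T v)"
    and S: "\<And>x v. x \<in> S \<Longrightarrow> v \<in> D \<Longrightarrow> x v \<in> T v" "\<And>x v. x \<in> S \<Longrightarrow> v \<notin> D \<Longrightarrow> x v = 0"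
  shows "finite S" "card S \<le> (\<Prod>v\<in>D. card (T v))"
proof -
  have inj: "inj_on (\<lambda>x. restrict x D) S"
  proof (rule inj_onI)
    fix x y assume xy: "x \<in> S" "y \<in> S" and eq: "restrict x D = restrict y D"
    have "x v = y v" for v
    proof (cases "v \<in> D")
      case True
      then show ?thesis using fun_cong[OF eq, of v] by simp
    qed (simp add: S(2) xy)
    then show "x = y" by (rule ext)
  qed
  have sub: "(\<lambda>x. restrict x D) ` S \<subseteq> PiE D T" using S(1) by auto
  have fin: "finite (PiE D T)" using D T by (rule finite_PiE)
  show "finite S" using finite_imageD[OF finite_subset[OF sub fin] inj] .
  have "card S = card ((\<lambda>x. restrict x D) ` S)" using card_image[OF inj] by simp
  also have "\<dots> \<le> card (PiE D T)" by (rule card_mono[OF fin sub])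
  finally show "card S \<le> (\<Prod>v\<in>D. card (T v))" by (simp add: card_PiE D)
qed

lemma finite_expvecs_mdeg_le: "finite {a \<in> expvecs n. mdeg n a \<le> D}"
proof (rule card_funs_le(1)[of "{..<n}" "\<lambda>_. {..D}"])
  show "a v \<in> {..D}" if "a \<in> {a \<in> expvecs n. mdeg n a \<le> D}" for a v
    using that le_mdeg[of a n v] by simp
  show "a v = 0" if "a \<in> {a \<in> expvecs n. mdeg n a \<le> D}" "v \<notin> {..<n}" for a v
    using that by (simp add: expvecs_def)
qed simp_all

lemma finite_le_expvec: "m \<in> expvecs n \<Longrightarrow> finite {a. a \<le> m}"
proof (rule finite_subset[OF _ finite_expvecs_mdeg_le[of n "mdeg n m"]])
  assume "m \<in> expvecs n"
  then show "{a. a \<le> m} \<subseteq> {a \<in> expvecs n. mdeg n a \<le> mdeg n m}"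
    using expvecs_le mdeg_mono by blast
qed

definition radix :: "nat \<Rightarrow> nat \<Rightarrow> (nat \<Rightarrow> nat) \<Rightarrow> nat" where
  "radix W k a = (\<Sum>v<k. a v * W ^ v)"

lemma radix_add: "radix W k (a + b) = radix W k a + radix W k b"
  by (simp add: radix_def sum.distrib algebra_simps)

lemma radix_less: "(\<And>v. v < k \<Longrightarrow> a v < W) \<Longrightarrow> radix W k a < W ^ k"
proof (induction k)
  case (Suc k)
  have "radix W (Suc k) a = radix W k a + a k * W ^ k" by (simp add: radix_def)
  also have "\<dots> < W ^ k + a k * W ^ k" using Suc by simp
  also have "\<dots> = (a k + 1) * W ^ k" by simp
  also have "\<dots> \<le> W * W ^ k" using Suc.prems[of k] by (intro mult_right_mono) auto
  finally show ?case by simp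
qed (simp add: radix_def)

lemma radix_digits_eq:
  "(\<And>v. v < k \<Longrightarrow> a v < W) \<Longrightarrow> (\<And>v. v < k \<Longrightarrow> b v < W) \<Longrightarrow> radix W k a = radix W k b
   \<Longrightarrow> v < k \<Longrightarrow> a v = b v"
proof (induction k arbitrary: v)
  case (Suc k)
  have la: "radix W k a < W ^ k" and lb: "radix W k b < W ^ k" using Suc.prems by (auto intro: radix_less)
  have eq: "a k * W ^ k + radix W k a = b k * W ^ k + radix W k b"
    using Suc.prems(3) by (simp add: radix_def)
  have Wk: "W ^ k > 0" using la by (metis less_nat_zero_code gr0I)
  have "(a k * W ^ k + radix W k a) div W ^ k = a k" using la Wk by simp
  moreover have "(b k * W ^ k + radix W k b) div W ^ k = b k" using lb Wk by simp
  ultimately have ak: "a k = b k" using eq by simp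
  then have "radix W k a = radix W k b" using eq by simp
  then show ?case using Suc ak by (cases "v = k") auto
qed simp

text \<open>Exponent vectors ordered by total degree, ties broken by the value in base \<open>W\<close>.  Once \<open>W\<close>
  exceeds the degree, all digits are below \<open>W\<close>, so the order is total and additive there; this is
  all that is needed to see that the product of the lowest terms of two series cannot cancel.\<close>
definition lowest_in :: "nat \<Rightarrow> nat \<Rightarrow> (nat \<Rightarrow> nat) set \<Rightarrow> (nat \<Rightarrow> nat) \<Rightarrow> bool" where
  "lowest_in n W S s \<longleftrightarrow> s \<in> S \<and> (\<forall>t\<in>S. mdeg n s < mdeg n t \<or>
     mdeg n s = mdeg n t \<and> radix W n s \<le> radix W n t)"

lemma exists_lowest_in:
  assumes "S \<subseteq> expvecs n" "S \<noteq> {}"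
  obtains s where "lowest_in n W S s"
proof -
  define D where "D = (LEAST d. \<exists>t\<in>S. mdeg n t = d)"
  define SD where "SD = {t \<in> S. mdeg n t = D}"
  have D_le: "D \<le> mdeg n t" if "t \<in> S" for t
    unfolding D_def using that by (auto intro: Least_le)
  obtain t0 where t0: "t0 \<in> S" using assms(2) by blast
  have "\<exists>t\<in>S. mdeg n t = D"
    unfolding D_def by (rule LeastI[of _ "mdeg n t0"]) (use t0 in blast)
  then have ne: "SD \<noteq> {}" by (auto simp: SD_def)
  have "SD \<subseteq> {a \<in> expvecs n. mdeg n a \<le> D}" using assms(1) by (auto simp: SD_def)
  then have fin: "finite SD" using finite_expvecs_mdeg_le finite_subset by blast
  obtain s where s: "s \<in> SD" "radix W n s = Min (radix W n ` SD)"
    using Min_in[OF finite_imageI[OF fin]] ne by (metis (no_types, lifting) empty_is_image imageE)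
  have s_min: "radix W n s \<le> radix W n t" if "t \<in> SD" for t
    unfolding s(2) using fin that by simp
  have "lowest_in n W S s"
    unfolding lowest_in_def
  proof (intro conjI ballI)
    show "s \<in> S" using s(1) by (simp add: SD_def)
    fix t assume t: "t \<in> S"
    have "mdeg n s = D" using s(1) by (simp add: SD_def)
    then show "mdeg n s < mdeg n t \<or> mdeg n s = mdeg n t \<and> radix W n s \<le> radix W n t"
      using D_le[OF t] s_min[of t] t by (auto simp: SD_def)
  qed
  then show ?thesis by (rule that)
qed

lemma lowest_inD:
  assumes "lowest_in n W S s" "t \<in> S"
  shows "s \<in> S" "mdeg n s \<le> mdeg n t" "mdeg n s = mdeg n t \<Longrightarrow> radix W n s \<le> radix W n t"
  using assms unfolding lowest_in_def by auto

lemma lowest_in_sum_unique: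
  assumes A: "lowest_in n W A as" "a \<in> A" and B: "lowest_in n W B bs" "b \<in> B"
    and sub: "A \<subseteq> expvecs n" and sum: "a + b = as + bs" and W: "mdeg n as < W"
  shows "a = as"
proof -
  have "mdeg n a + mdeg n b = mdeg n as + mdeg n bs"
    using sum by (metis mdeg_add)
  then have deg: "mdeg n a = mdeg n as" "mdeg n b = mdeg n bs"
    using lowest_inD(2)[OF A] lowest_inD(2)[OF B] by linarith+
  have "radix W n a + radix W n b = radix W n as + radix W n bs"
    using sum by (metis radix_add)
  then have rad: "radix W n a = radix W n as"
    using lowest_inD(3)[OF A deg(1)[symmetric]] lowest_inD(3)[OF B deg(2)[symmetric]] by linarith
  have as: "as \<in> expvecs n" "a \<in> expvecs n" using lowest_inD(1)[OF A] A(2) sub by auto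
  have "a v < W" "as v < W" if "v < n" for v
    using le_mdeg[OF as(2), of v] le_mdeg[OF as(1), of v] W deg(1) by linarith+
  then have "a v = as v" if "v < n" for v using radix_digits_eq[OF _ _ rad that] by blast
  moreover have "a v = as v" if "\<not> v < n" for v
    using that as by (simp add: expvecs_def)
  ultimately show ?thesis by (metis ext)
qed

lemma poly_times_at_lowest:
  assumes p: "is_poly n p" "lowest_in n W {a. p a \<noteq> 0} as"
    and g: "lowest_in n W {b \<in> expvecs n. g b \<noteq> 0} bs" and W: "mdeg n as < W"
  shows "poly_times p g (as + bs) = p as * g bs"
proof -
  have supp: "{a. p a \<noteq> 0} \<subseteq> expvecs n" and fin: "finite {a. p a \<noteq> 0}"
    using p(1) by (auto simp: is_poly_def is_series_def)
  have as: "as \<in> {a. p a \<noteq> 0}" using p(2) by (simp add: lowest_in_def)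
  have bs: "bs \<in> expvecs n" using g by (simp add: lowest_in_def)
  have other: "xmon a g (as + bs) = 0" if "p a \<noteq> 0" "a \<noteq> as" for a
  proof (rule ccontr)
    assume nz: "xmon a g (as + bs) \<noteq> 0"
    define b where "b = (\<lambda>v. (as + bs) v - a v)"
    have "a \<le> as + bs" using nz by (auto simp: xmon_def split: if_splits)
    then have "a + b = as + bs" by (auto simp: b_def le_fun_def fun_eq_iff)
    moreover have "b \<in> {b \<in> expvecs n. g b \<noteq> 0}"
      using nz \<open>a \<le> as + bs\<close> supp as bs
      by (auto simp: xmon_def b_def expvecs_def)
    ultimately have "a = as"
      using lowest_in_sum_unique[OF p(2) _ g _ supp _ W] that(1) by blast
    then show False using that(2) by simp
  qed
  have "poly_times p g (as + bs) = p as * xmon as g (as + bs)"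
    unfolding poly_times_def using fin as other by (subst sum.remove) auto
  also have "xmon as g (as + bs) = g bs" by (simp add: xmon_def le_fun_def)
  finally show ?thesis .
qed

lemma poly_times_no_zero_divisors:
  assumes p: "is_poly n p" "p \<noteq> (\<lambda>_. 0)" and pg: "\<forall>m\<in>expvecs n. poly_times p g m = 0"
  shows "\<forall>m\<in>expvecs n. g m = 0"
proof (rule ccontr)
  assume "\<not> (\<forall>m\<in>expvecs n. g m = 0)"
  then have ne_g: "{b \<in> expvecs n. g b \<noteq> 0} \<noteq> {}" by auto
  have supp: "{a. p a \<noteq> 0} \<subseteq> expvecs n" using p(1) by (auto simp: is_poly_def is_series_def)
  have ne_p: "{a. p a \<noteq> 0} \<noteq> {}" using p(2) by auto
  obtain as where as: "lowest_in n (Max (mdeg n ` {a. p a \<noteq> 0}) + 1) {a. p a \<noteq> 0} as"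
    using exists_lowest_in[OF supp ne_p] by blast
  obtain bs where bs: "lowest_in n (Max (mdeg n ` {a. p a \<noteq> 0}) + 1) {b \<in> expvecs n. g b \<noteq> 0} bs"
    using exists_lowest_in[OF _ ne_g] by blast
  have fin: "finite {a. p a \<noteq> 0}" using p(1) by (simp add: is_poly_def)
  have "mdeg n as < Max (mdeg n ` {a. p a \<noteq> 0}) + 1"
    using as fin by (simp add: lowest_in_def le_imp_less_Suc)
  from poly_times_at_lowest[OF p(1) as bs this] have "poly_times p g (as + bs) = p as * g bs" .
  moreover have "as + bs \<in> expvecs n" using as bs supp by (auto simp: lowest_in_def intro: expvecs_add)
  ultimately show False using pg as bs by (auto simp: lowest_in_def)
qed

section \<open>Spans of shifted derivatives\<close>

definition mon_derivs ::
    "nat \<Rightarrow> ((nat \<Rightarrow> nat) \<Rightarrow> 'a::field) \<Rightarrow> (nat \<Rightarrow> nat) set \<Rightarrow> (nat \<Rightarrow> nat) set \<Rightarrow> ((nat \<Rightarrow> nat) \<Rightarrow> 'a) set" where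
  "mon_derivs n f A \<Gamma> = {xmon \<beta> (pder n \<delta> f) | \<beta> \<delta>. \<beta> \<in> A \<and> \<delta> \<in> \<Gamma>}"

abbreviation mon_deriv_span ::
    "nat \<Rightarrow> ((nat \<Rightarrow> nat) \<Rightarrow> 'a::field) \<Rightarrow> (nat \<Rightarrow> nat) set \<Rightarrow> (nat \<Rightarrow> nat) set \<Rightarrow> ((nat \<Rightarrow> nat) \<Rightarrow> 'a) set" where
  "mon_deriv_span n f A \<Gamma> \<equiv> fs.span (mon_derivs n f A \<Gamma>)"

lemma mon_deriv_in_span: "\<beta> \<in> A \<Longrightarrow> \<delta> \<in> \<Gamma> \<Longrightarrow> xmon \<beta> (pder n \<delta> f) \<in> mon_deriv_span n f A \<Gamma>"
  unfolding mon_derivs_def by (rule fs.span_base) blast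

lemma pder_in_span: "(\<lambda>_. 0) \<in> A \<Longrightarrow> \<delta> \<in> \<Gamma> \<Longrightarrow> pder n \<delta> f \<in> mon_deriv_span n f A \<Gamma>"
  using mon_deriv_in_span[of "\<lambda>_. 0" A \<delta> \<Gamma> n f] by simp

lemma mon_deriv_span_mono:
  "A \<subseteq> A' \<Longrightarrow> \<Gamma> \<subseteq> \<Gamma>' \<Longrightarrow> x \<in> mon_deriv_span n f A \<Gamma> \<Longrightarrow> x \<in> mon_deriv_span n f A' \<Gamma>'"
  unfolding mon_derivs_def by (erule fs.span_mono[THEN subsetD, rotated]) blast

lemma mon_deriv_span_image:
  assumes "flinear \<phi>"
    and "\<And>\<beta> \<delta>. \<beta> \<in> A \<Longrightarrow> \<delta> \<in> \<Gamma> \<Longrightarrow> \<phi> (xmon \<beta> (pder n \<delta> f)) \<in> mon_deriv_span n f A' \<Gamma>'"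
    and "x \<in> mon_deriv_span n f A \<Gamma>"
  shows "\<phi> x \<in> mon_deriv_span n f A' \<Gamma>'"
proof -
  have "\<phi> ` mon_derivs n f A \<Gamma> \<subseteq> mon_deriv_span n f A' \<Gamma>'"
    using assms(2) by (auto simp: mon_derivs_def)
  then have "fs.span (\<phi> ` mon_derivs n f A \<Gamma>) \<subseteq> mon_deriv_span n f A' \<Gamma>'"
    by (simp add: fs.span_minimal fs.subspace_span)
  then show ?thesis using fsp.linear_span_image[OF assms(1)] assms(3) by blast
qed

lemma mon_deriv_span_xmon:
  assumes "\<And>\<beta>. \<beta> \<in> A \<Longrightarrow> \<gamma> + \<beta> \<in> A'" "x \<in> mon_deriv_span n f A \<Gamma>"
  shows "xmon \<gamma> x \<in> mon_deriv_span n f A' \<Gamma>"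
  by (rule mon_deriv_span_image[OF flinear_xmon _ assms(2)]) (simp add: xmon_add mon_deriv_in_span assms(1))

lemma mon_deriv_span_poly_times:
  assumes "\<And>a \<beta>. p a \<noteq> 0 \<Longrightarrow> \<beta> \<in> A \<Longrightarrow> a + \<beta> \<in> A'" "x \<in> mon_deriv_span n f A \<Gamma>"
  shows "poly_times p x \<in> mon_deriv_span n f A' \<Gamma>"
proof (rule mon_deriv_span_image[OF flinear_poly_times _ assms(2)])
  fix \<beta> \<delta> assume "\<beta> \<in> A" "\<delta> \<in> \<Gamma>"
  then show "poly_times p (xmon \<beta> (pder n \<delta> f)) \<in> mon_deriv_span n f A' \<Gamma>"
    unfolding poly_times_eq_sum xmon_add
    by (intro fs.span_sum fs.span_scale mon_deriv_in_span assms(1)) simp_all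
qed

lemma mon_deriv_span_dvar:
  assumes j: "j < n"
    and A: "\<And>\<beta>. \<beta> \<in> A \<Longrightarrow> \<beta> \<in> A' \<and> \<beta>(j := \<beta> j - 1) \<in> A'"
    and \<Gamma>: "\<And>\<delta>. \<delta> \<in> \<Gamma> \<Longrightarrow> \<delta> \<in> \<Gamma>' \<and> \<delta>(j := \<delta> j + 1) \<in> \<Gamma>'"
    and x: "x \<in> mon_deriv_span n f A \<Gamma>"
  shows "dvar j x \<in> mon_deriv_span n f A' \<Gamma>'"
proof (rule mon_deriv_span_image[OF flinear_dvar _ x])
  fix \<beta> \<delta> assume b: "\<beta> \<in> A" and d: "\<delta> \<in> \<Gamma>"
  have "dvar j (xmon \<beta> (pder n \<delta> f)) = xmon \<beta> (pder n (\<delta>(j := \<delta> j + 1)) f) +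
      fscale (of_nat (\<beta> j)) (xmon (\<beta>(j := \<beta> j - 1)) (pder n \<delta> f))"
    by (simp add: dvar_xmon dvar_pder[OF j])
  also have "\<dots> \<in> mon_deriv_span n f A' \<Gamma>'"
    using A[OF b] \<Gamma>[OF d] by (intro fs.span_add fs.span_scale mon_deriv_in_span) auto
  finally show "dvar j (xmon \<beta> (pder n \<delta> f)) \<in> mon_deriv_span n f A' \<Gamma>'" .
qed

definition deg_le :: "nat \<Rightarrow> nat \<Rightarrow> (nat \<Rightarrow> nat) set" where
  "deg_le n Y = {\<beta> \<in> expvecs n. mdeg n \<beta> \<le> Y}"

lemma zero_in_deg_le: "(\<lambda>_. 0) \<in> deg_le n Y"
  by (simp add: deg_le_def expvecs_def mdeg_def)

lemma deg_le_dec: "\<beta> \<in> deg_le n Y \<Longrightarrow> \<beta>(j := \<beta> j - 1) \<in> deg_le n Y"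
proof -
  assume b: "\<beta> \<in> deg_le n Y"
  have le: "\<beta>(j := \<beta> j - 1) \<le> \<beta>" by (simp add: le_fun_def)
  then show ?thesis using b mdeg_mono[OF le, of n] expvecs_le[OF _ le] by (simp add: deg_le_def)
qed

lemma deg_le_add: "a \<in> deg_le n d1 \<Longrightarrow> \<beta> \<in> deg_le n d2 \<Longrightarrow> a + \<beta> \<in> deg_le n (d1 + d2)"
  by (simp add: deg_le_def mdeg_add expvecs_add add_mono)

lemma poly_support_deg_le:
  assumes "is_poly n p" "tdeg n p \<le> d" "p a \<noteq> 0" shows "a \<in> deg_le n d"
proof -
  have "finite ({mdeg n m | m. p m \<noteq> 0} \<union> {0})"
    using assms(1) by (simp add: is_poly_def setcompr_eq_image)
  then have "mdeg n a \<le> tdeg n p" unfolding tdeg_def using assms(3) by (intro Max_ge) auto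
  moreover have "a \<in> expvecs n" using assms(1,3) by (auto simp: is_poly_def is_series_def)
  ultimately show ?thesis using assms(2) by (simp add: deg_le_def)
qed

section \<open>Reduction by the leading coefficients\<close>

lemma is_series_dvar:
  assumes "i < n" "is_series n g" shows "is_series n (dvar i g)"
  unfolding is_series_def
proof (intro allI impI)
  fix m assume "m \<notin> expvecs n"
  then have "m(i := m i + 1) \<notin> expvecs n" using assms(1) by (auto simp: expvecs_def)
  then show "dvar i g m = 0" using assms(2) by (simp add: dvar_def is_series_def)
qed

lemma is_series_funpow_dvar: "i < n \<Longrightarrow> is_series n g \<Longrightarrow> is_series n ((dvar i ^^ j) g)"
  by (induction j) (auto intro: is_series_dvar)

lemma is_series_xmon:
  assumes "a \<in> expvecs n" "is_series n g" shows "is_series n (xmon a g)"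
  unfolding is_series_def
proof (intro allI impI)
  fix m assume "m \<notin> expvecs n"
  then have "(\<lambda>u. m u - a u) \<notin> expvecs n" using assms(1) by (auto simp: expvecs_def)
  then show "xmon a g m = 0" using assms(2) by (simp add: xmon_def is_series_def)
qed

lemma is_series_poly_times:
  assumes "is_poly n p" "is_series n g" shows "is_series n (poly_times p g)"
  unfolding is_series_def
proof (intro allI impI)
  fix m assume m: "m \<notin> expvecs n"
  have "xmon a g m = 0" if "p a \<noteq> 0" for a
  proof -
    have "a \<in> expvecs n" using assms(1) that by (auto simp: is_poly_def is_series_def)
    then show ?thesis using is_series_xmon[OF _ assms(2)] m by (simp add: is_series_def)
  qed
  then show "poly_times p g m = 0" by (simp add: poly_times_def)
qed

lemma is_series_sum: "(\<And>x. x \<in> A \<Longrightarrow> is_series n (g x)) \<Longrightarrow> is_series n (\<Sum>x\<in>A. g x)"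
  by (simp add: is_series_def sum_fun_apply)

lemma pmult_eq_poly_times:
  assumes m: "m \<in> expvecs n" and p: "is_poly n p"
  shows "pmult p g m = poly_times p g m"
proof -
  have "pmult p g m = (\<Sum>a\<in>{a. a \<le> m} \<inter> {a. p a \<noteq> 0}. p a * g (\<lambda>v. m v - a v))"
    unfolding pmult_def using finite_le_expvec[OF m] by (intro sum.mono_neutral_right) auto
  also have "\<dots> = (\<Sum>a\<in>{a. p a \<noteq> 0}. p a * xmon a g m)"
    using p by (intro sum.mono_neutral_cong_left) (auto simp: xmon_def is_poly_def)
  finally show ?thesis by (simp add: poly_times_def)
qed

lemma ore_op_annihilates:
  assumes f: "is_series n f" and i: "i < n" and l: "ore_op n l"
    and ann: "\<forall>m\<in>expvecs n. apply_ore i l f m = 0"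
  shows "(\<Sum>j\<in>{j. l j \<noteq> (\<lambda>_. 0)}. poly_times (l j) ((dvar i ^^ j) f)) = 0"
proof (rule ext)
  fix m
  let ?Lf = "\<Sum>j\<in>{j. l j \<noteq> (\<lambda>_. 0)}. poly_times (l j) ((dvar i ^^ j) f)"
  show "?Lf m = 0 m"
  proof (cases "m \<in> expvecs n")
    case True
    then have "?Lf m = apply_ore i l f m"
      using l by (simp add: sum_fun_apply apply_ore_def pmult_eq_poly_times ore_op_def)
    then show ?thesis using ann True by simp
  next
    case False
    have "is_series n ?Lf"
      using l by (intro is_series_sum is_series_poly_times is_series_funpow_dvar i f) (auto simp: ore_op_def)
    then show ?thesis using False by (simp add: is_series_def)
  qed
qed

definition annihilators ::
    "nat \<Rightarrow> ((nat \<Rightarrow> nat) \<Rightarrow> 'a::field) \<Rightarrow> (nat \<Rightarrow> nat \<Rightarrow> (nat \<Rightarrow> nat) \<Rightarrow> 'a) \<Rightarrow> nat \<Rightarrow> bool" where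
  "annihilators n f L d \<longleftrightarrow> is_series n f \<and> (\<forall>i<n. ore_op n (L i) \<and> L i \<noteq> (\<lambda>_ _. 0) \<and>
     (\<forall>m\<in>expvecs n. apply_ore i (L i) f m = 0) \<and> op_degree n (L i) \<le> d)"

definition lcoeff :: "(nat \<Rightarrow> nat \<Rightarrow> (nat \<Rightarrow> nat) \<Rightarrow> 'a::zero) \<Rightarrow> nat \<Rightarrow> (nat \<Rightarrow> nat) \<Rightarrow> 'a" where
  "lcoeff L i = L i (op_order (L i))"

lemma op_order_max:
  assumes "ore_op n l" "l \<noteq> (\<lambda>_. 0)"
  shows "l (op_order l) \<noteq> (\<lambda>_. 0)" "l j \<noteq> (\<lambda>_. 0) \<Longrightarrow> j \<le> op_order l"
proof -
  let ?S = "{j. l j \<noteq> (\<lambda>_. 0)}"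
  have fin: "finite ?S" using assms(1) by (simp add: ore_op_def)
  have ne: "?S \<noteq> {}" using assms(2) by (auto simp: fun_eq_iff)
  have "op_order l = Max ?S"
    unfolding op_order_def using fin ne by (simp add: max_def Max_insert[symmetric])
  then show "l (op_order l) \<noteq> (\<lambda>_. 0)" "l j \<noteq> (\<lambda>_. 0) \<Longrightarrow> j \<le> op_order l"
    using Max_in[OF fin ne] fin by auto
qed

lemma tdeg_le_op_degree:
  assumes "ore_op n l" "l j \<noteq> (\<lambda>_. 0)" shows "tdeg n (l j) \<le> op_degree n l"
proof -
  have "finite {tdeg n (l j) | j. l j \<noteq> (\<lambda>_. 0)}"
    using assms(1) by (simp add: ore_op_def setcompr_eq_image)
  then show ?thesis unfolding op_degree_def using assms(2) by (intro Max_ge) auto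
qed

lemma annihilators_coeff:
  assumes "annihilators n f L d" "i < n" "L i j \<noteq> (\<lambda>_. 0)"
  shows "is_poly n (L i j)" "tdeg n (L i j) \<le> d" "j \<le> op_order (L i)"
proof -
  have L: "ore_op n (L i)" "L i \<noteq> (\<lambda>_. 0)" "op_degree n (L i) \<le> d"
    using assms(1,2) by (auto simp: annihilators_def fun_eq_iff)
  show "is_poly n (L i j)" using L by (simp add: ore_op_def)
  show "tdeg n (L i j) \<le> d" using tdeg_le_op_degree[OF L(1) assms(3)] L(3) by simp
  show "j \<le> op_order (L i)" using op_order_max(2)[OF L(1,2) assms(3)] .
qed

lemma annihilators_lcoeff:
  assumes "annihilators n f L d" "i < n"
  shows "lcoeff L i \<noteq> (\<lambda>_. 0)" "is_poly n (lcoeff L i)" "tdeg n (lcoeff L i) \<le> d"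
proof -
  have "ore_op n (L i)" "L i \<noteq> (\<lambda>_. 0)" using assms by (auto simp: annihilators_def fun_eq_iff)
  then show nz: "lcoeff L i \<noteq> (\<lambda>_. 0)" using op_order_max(1) by (simp add: lcoeff_def)
  show "is_poly n (lcoeff L i)" "tdeg n (lcoeff L i) \<le> d"
    using annihilators_coeff[OF assms nz[unfolded lcoeff_def]] by (simp_all add: lcoeff_def)
qed

lemma poly_times_pder_in_span:
  assumes "is_poly n p" "tdeg n p \<le> d" "\<delta> \<in> \<Gamma>"
  shows "poly_times p (pder n \<delta> f) \<in> mon_deriv_span n f (deg_le n d) \<Gamma>"
proof (rule mon_deriv_span_poly_times[OF _ pder_in_span[OF zero_in_deg_le[of n 0] assms(3)]])
  show "a + \<beta> \<in> deg_le n d" if "p a \<noteq> 0" "\<beta> \<in> deg_le n 0" for a \<beta>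
    using deg_le_add[OF poly_support_deg_le[OF assms(1,2) that(1)] that(2)] by simp
qed

text \<open>\<open>L\<^sub>i f = 0\<close> read as a rewrite rule for its leading term.\<close>
lemma lcoeff_times_pder_base:
  assumes L: "annihilators n f L d" and i: "i < n"
  defines "\<rho> \<equiv> (\<lambda>_. 0)(i := op_order (L i))"
  shows "poly_times (lcoeff L i) (pder n \<rho> f) \<in> mon_deriv_span n f (deg_le n d) {..<\<rho>}"
proof -
  let ?r = "op_order (L i)"
  let ?S = "{j. L i j \<noteq> (\<lambda>_. 0)}"
  let ?t = "\<lambda>j. poly_times (L i j) ((dvar i ^^ j) f)"
  have fin: "finite ?S" using L i by (simp add: annihilators_def ore_op_def)
  have rS: "?r \<in> ?S" using annihilators_lcoeff(1)[OF L i] by (simp add: lcoeff_def)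
  have "(\<Sum>j\<in>?S. ?t j) = 0"
    using ore_op_annihilates[of n f i "L i"] L i by (auto simp: annihilators_def)
  moreover have "(\<Sum>j\<in>?S. ?t j) = ?t ?r + (\<Sum>j\<in>?S - {?r}. ?t j)" by (rule sum.remove[OF fin rS])
  ultimately have eq: "?t ?r = - (\<Sum>j\<in>?S - {?r}. ?t j)" by (simp add: eq_neg_iff_add_eq_0)
  have "?t j \<in> mon_deriv_span n f (deg_le n d) {..<\<rho>}" if j: "j \<in> ?S - {?r}" for j
  proof -
    have "j < ?r" using annihilators_coeff(3)[OF L i] j by force
    then have "(\<lambda>_. 0)(i := j) \<in> {..<\<rho>}" by (auto simp: \<rho>_def less_le le_fun_def fun_eq_iff)
    then show ?thesis
      using annihilators_coeff[OF L i] j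
      by (simp add: funpow_dvar_eq_pder[OF i] poly_times_pder_in_span)
  qed
  then have "?t ?r \<in> mon_deriv_span n f (deg_le n d) {..<\<rho>}"
    unfolding eq by (intro fs.span_neg fs.span_sum) auto
  then show ?thesis by (simp add: lcoeff_def funpow_dvar_eq_pder[OF i] \<rho>_def)
qed

lemma less_upd_Suc:
  fixes \<delta> \<delta>' :: "nat \<Rightarrow> nat" assumes "\<delta>' < \<delta>"
  shows "\<delta>' < \<delta>(j := \<delta> j + 1)" "\<delta>'(j := \<delta>' j + 1) < \<delta>(j := \<delta> j + 1)"
proof -
  have le: "\<delta>' v \<le> \<delta> v" for v using assms by (simp add: less_le le_fun_def)
  have ne: "\<delta>' \<noteq> \<delta>" using assms by simp
  have "\<delta>' \<noteq> \<delta>(j := \<delta> j + 1)"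
  proof
    assume "\<delta>' = \<delta>(j := \<delta> j + 1)"
    then have "\<delta>' j = \<delta> j + 1" by simp
    then show False using le[of j] by simp
  qed
  then show "\<delta>' < \<delta>(j := \<delta> j + 1)" using le by (simp add: less_le le_fun_def le_SucI)
  have "\<delta>'(j := \<delta>' j + 1) \<noteq> \<delta>(j := \<delta> j + 1)"
  proof
    assume eq: "\<delta>'(j := \<delta>' j + 1) = \<delta>(j := \<delta> j + 1)"
    have "\<delta>' v = \<delta> v" for v using fun_cong[OF eq, of v] by (cases "v = j") auto
    then show False using ne by (simp add: fun_eq_iff)
  qed
  then show "\<delta>'(j := \<delta>' j + 1) < \<delta>(j := \<delta> j + 1)" using le by (simp add: less_le le_fun_def)
qed

text \<open>Differentiating the relation for \<open>\<delta>\<close> by \<open>D\<^sub>j\<close> gives the one for \<open>\<delta> + e\<^sub>j\<close>; the Leibniz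
  terms keep the coefficient degree \<open>\<le> d\<close> and the derivative \<open>\<delta> < \<delta> + e\<^sub>j\<close>.\<close>
lemma poly_times_pder_step:
  assumes p: "is_poly n p" "tdeg n p \<le> d" and j: "j < n"
    and \<delta>: "poly_times p (pder n \<delta> f) \<in> mon_deriv_span n f (deg_le n d) {..<\<delta>}"
  shows "poly_times p (pder n (\<delta>(j := \<delta> j + 1)) f)
           \<in> mon_deriv_span n f (deg_le n d) {..<\<delta>(j := \<delta> j + 1)}"
proof -
  let ?d = "\<delta>(j := \<delta> j + 1)"
  let ?E = "\<Sum>a\<in>{a. p a \<noteq> 0}. fscale (p a * of_nat (a j)) (xmon (a(j := a j - 1)) (pder n \<delta> f))"
  have eq: "poly_times p (pder n ?d f) = dvar j (poly_times p (pder n \<delta> f)) - ?E"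
    by (simp add: dvar_poly_times dvar_pder[OF j])
  have "\<delta> \<le> ?d" "\<delta> \<noteq> ?d"
    by (simp add: le_fun_def) (metis fun_upd_same n_not_Suc_n Suc_eq_plus1)
  then have "\<delta> < ?d" by (simp add: less_le)
  then have "?E \<in> mon_deriv_span n f (deg_le n d) {..<?d}"
    using p by (intro fs.span_sum fs.span_scale mon_deriv_in_span deg_le_dec poly_support_deg_le) auto
  moreover have "dvar j (poly_times p (pder n \<delta> f)) \<in> mon_deriv_span n f (deg_le n d) {..<?d}"
  proof (rule mon_deriv_span_dvar[OF j _ _ \<delta>])
    show "\<beta> \<in> deg_le n d \<and> \<beta>(j := \<beta> j - 1) \<in> deg_le n d" if "\<beta> \<in> deg_le n d" for \<beta>
      using that deg_le_dec by blast
    show "\<delta>' \<in> {..<?d} \<and> \<delta>'(j := \<delta>' j + 1) \<in> {..<?d}" if "\<delta>' \<in> {..<\<delta>}" for \<delta>'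
      using that less_upd_Suc[of \<delta>' \<delta> j] by simp
  qed
  ultimately show ?thesis unfolding eq by (intro fs.span_diff)
qed

lemma lcoeff_times_pder_reduces:
  assumes L: "annihilators n f L d" and i: "i < n"
  shows "\<delta> \<in> expvecs n \<Longrightarrow> op_order (L i) \<le> \<delta> i \<Longrightarrow>
    poly_times (lcoeff L i) (pder n \<delta> f) \<in> mon_deriv_span n f (deg_le n d) {..<\<delta>}"
proof (induction "mdeg n \<delta>" arbitrary: \<delta> rule: less_induct)
  case less
  let ?\<rho> = "(\<lambda>_. 0::nat)(i := op_order (L i))"
  show ?case
  proof (cases "\<delta> = ?\<rho>")
    case True then show ?thesis using lcoeff_times_pder_base[OF L i] by simp
  next
    case False
    then obtain j where "\<delta> j \<noteq> ?\<rho> j" by (auto simp: fun_eq_iff)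
    then have jgt: "\<delta> j > ?\<rho> j" using less.prems(2) by (cases "j = i") auto
    have j: "j < n"
    proof (rule ccontr)
      assume "\<not> j < n"
      then have "\<delta> j = 0" using less.prems(1) by (simp add: expvecs_def)
      then show False using jgt by simp
    qed
    define \<delta>0 where "\<delta>0 = \<delta>(j := \<delta> j - 1)"
    have d0: "\<delta>0(j := \<delta>0 j + 1) = \<delta>" using jgt by (auto simp: \<delta>0_def fun_eq_iff)
    have "\<delta>0 \<le> \<delta>" by (simp add: \<delta>0_def le_fun_def)
    then have e0: "\<delta>0 \<in> expvecs n" using expvecs_le[OF less.prems(1)] by blast
    have "\<delta> = \<delta>0 + unit_exp j" using d0 unit_exp_upd[of \<delta>0 j] by simp
    then have "mdeg n \<delta> = mdeg n \<delta>0 + 1" by (simp add: mdeg_add mdeg_unit_exp[OF j])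
    moreover have "op_order (L i) \<le> \<delta>0 i" using less.prems(2) jgt by (cases "j = i") (auto simp: \<delta>0_def)
    ultimately have "poly_times (lcoeff L i) (pder n \<delta>0 f) \<in> mon_deriv_span n f (deg_le n d) {..<\<delta>0}"
      using less.hyps e0 by simp
    from poly_times_pder_step[OF annihilators_lcoeff(2,3)[OF L i] j this] show ?thesis unfolding d0 .
  qed
qed

definition lc_mult ::
    "(nat \<Rightarrow> nat \<Rightarrow> (nat \<Rightarrow> nat) \<Rightarrow> 'a::field) \<Rightarrow> nat list \<Rightarrow> ((nat \<Rightarrow> nat) \<Rightarrow> 'a) \<Rightarrow> (nat \<Rightarrow> nat) \<Rightarrow> 'a" where
  "lc_mult L xs g = foldr (\<lambda>i. poly_times (lcoeff L i)) xs g"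

lemma lc_mult_Nil [simp]: "lc_mult L [] g = g"
  by (simp add: lc_mult_def)

lemma lc_mult_Cons [simp]: "lc_mult L (i # xs) g = poly_times (lcoeff L i) (lc_mult L xs g)"
  by (simp add: lc_mult_def)

lemma lc_mult_append: "lc_mult L (xs @ ys) g = lc_mult L xs (lc_mult L ys g)"
  by (simp add: lc_mult_def)

lemma lc_mult_poly_times: "lc_mult L xs (poly_times p g) = poly_times p (lc_mult L xs g)"
  by (induction xs) (simp_all add: poly_times_commute)

lemma lc_mult_xmon: "lc_mult L xs (xmon a g) = xmon a (lc_mult L xs g)"
  by (induction xs) (simp_all add: xmon_poly_times)

lemma lc_mult_commute: "lc_mult L xs (lc_mult L ys g) = lc_mult L ys (lc_mult L xs g)"
  by (induction xs) (simp_all add: lc_mult_poly_times)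

lemma lc_mult_remove1:
  "i \<in> set xs \<Longrightarrow> lc_mult L xs g = lc_mult L (remove1 i xs) (poly_times (lcoeff L i) g)"
proof (induction xs)
  case (Cons x xs)
  then show ?case by (cases "x = i") (simp_all add: lc_mult_poly_times poly_times_commute)
qed simp

lemma flinear_lc_mult: "flinear (lc_mult L xs)"
proof (induction xs)
  case Nil
  then show ?case using fs.linear_id by (simp add: id_def lc_mult_def[abs_def])
next
  case (Cons x xs)
  then show ?case using flinear_comp[OF flinear_poly_times Cons] by (simp add: lc_mult_def[abs_def])
qed

lemma lc_mult_in_span:
  assumes L: "annihilators n f L d" and xs: "set xs \<subseteq> {..<n}"
    and g: "g \<in> mon_deriv_span n f (deg_le n Y) \<Gamma>"
  shows "lc_mult L xs g \<in> mon_deriv_span n f (deg_le n (Y + length xs * d)) \<Gamma>"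
  using xs
proof (induction xs)
  case (Cons x xs)
  have "lc_mult L xs g \<in> mon_deriv_span n f (deg_le n (Y + length xs * d)) \<Gamma>" using Cons by simp
  then have "poly_times (lcoeff L x) (lc_mult L xs g)
      \<in> mon_deriv_span n f (deg_le n (d + (Y + length xs * d))) \<Gamma>"
    using annihilators_lcoeff(2,3)[OF L] Cons.prems
    by (intro mon_deriv_span_poly_times) (auto intro: deg_le_add poly_support_deg_le)
  then show ?case by (simp add: algebra_simps)
qed (simp add: g)

lemma lc_mult_no_zero_divisors:
  assumes "\<And>i. i \<in> set xs \<Longrightarrow> is_poly n (lcoeff L i) \<and> lcoeff L i \<noteq> (\<lambda>_. 0)"
    and "\<forall>m\<in>expvecs n. lc_mult L xs g m = 0"
  shows "\<forall>m\<in>expvecs n. g m = 0"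
  using assms by (induction xs) (auto dest: poly_times_no_zero_divisors)

definition rep_list :: "'a list \<Rightarrow> nat \<Rightarrow> 'a list" where
  "rep_list xs k = concat (replicate k xs)"

lemma length_rep_list: "length (rep_list xs k) = k * length xs"
  by (induction k) (auto simp: rep_list_def)

lemma set_rep_list: "set (rep_list xs k) \<subseteq> set xs"
  by (auto simp: rep_list_def)

lemma lc_mult_rep_list_Suc:
  assumes "i \<in> set hs"
  shows "lc_mult L (rep_list hs (Suc k)) g
    = lc_mult L (rep_list hs k) (lc_mult L (remove1 i hs) (poly_times (lcoeff L i) g))"
proof -
  have "lc_mult L (rep_list hs (Suc k)) g = lc_mult L (rep_list hs k) (lc_mult L hs g)"
    by (simp add: rep_list_def lc_mult_append lc_mult_commute)
  also have "lc_mult L hs g = lc_mult L (remove1 i hs) (poly_times (lcoeff L i) g)"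
    by (rule lc_mult_remove1[OF assms])
  finally show ?thesis .
qed

definition supported :: "nat \<Rightarrow> nat list \<Rightarrow> (nat \<Rightarrow> nat) set" where
  "supported n hs = {\<delta> \<in> expvecs n. \<forall>v. v \<notin> set hs \<longrightarrow> \<delta> v = 0}"

definition reduced ::
    "nat \<Rightarrow> (nat \<Rightarrow> nat \<Rightarrow> (nat \<Rightarrow> nat) \<Rightarrow> 'a::zero) \<Rightarrow> nat list \<Rightarrow> (nat \<Rightarrow> nat) set" where
  "reduced n L hs = {\<delta> \<in> supported n hs. \<forall>i\<in>set hs. \<delta> i < op_order (L i)}"

lemma mdeg_strict_mono:
  assumes "\<delta> \<in> expvecs n" "\<delta>' < \<delta>" shows "mdeg n \<delta>' < mdeg n \<delta>"
proof -
  have le: "\<delta>' \<le> \<delta>" and "\<delta>' \<noteq> \<delta>" using assms(2) by (auto simp: less_le)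
  then obtain v where v: "\<delta>' v < \<delta> v" by (metis ext le_funD order.not_eq_order_implies_strict)
  have "v < n"
  proof (rule ccontr)
    assume "\<not> v < n"
    then have "\<delta> v = 0" using assms(1) by (simp add: expvecs_def)
    then show False using v by simp
  qed
  then show ?thesis unfolding mdeg_def using v le by (intro sum_strict_mono_ex1) (auto simp: le_fun_def)
qed

lemma supported_less:
  assumes "\<delta> \<in> supported n hs" "\<delta>' < \<delta>" shows "\<delta>' \<in> supported n hs"
proof -
  have le: "\<delta>' \<le> \<delta>" using assms(2) by simp
  then have "\<delta>' v = 0" if "v \<notin> set hs" for v using assms(1) le_funD[OF le, of v] that
    by (simp add: supported_def)
  then show ?thesis using expvecs_le[OF _ le] assms(1) by (simp add: supported_def)
qed

lemma lc_mult_pder_reduce_step: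
  assumes L: "annihilators n f L d" and hs: "set hs \<subseteq> {..<n}"
    and i: "i \<in> set hs" "op_order (L i) \<le> \<delta> i" and \<delta>: "\<delta> \<in> expvecs n"
    and less: "\<And>\<delta>'. \<delta>' < \<delta> \<Longrightarrow> lc_mult L (rep_list hs K) (pder n \<delta>' f)
      \<in> mon_deriv_span n f (deg_le n (K * (length hs * d))) (reduced n L hs)"
  shows "lc_mult L (rep_list hs (Suc K)) (pder n \<delta> f)
    \<in> mon_deriv_span n f (deg_le n (Suc K * (length hs * d))) (reduced n L hs)"
proof -
  define hs' where "hs' = remove1 i hs"
  have hs': "set hs' \<subseteq> {..<n}" "length hs' + 1 = length hs"
    using i(1) hs length_pos_if_in_set[OF i(1)]
    by (auto simp: hs'_def length_remove1 dest: subsetD[OF set_remove1_subset])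
  have "poly_times (lcoeff L i) (pder n \<delta> f) \<in> mon_deriv_span n f (deg_le n d) {..<\<delta>}"
    using lcoeff_times_pder_reduces[OF L _ \<delta> i(2)] i(1) hs by auto
  then have "lc_mult L (rep_list hs K) (lc_mult L hs' (poly_times (lcoeff L i) (pder n \<delta> f)))
      \<in> mon_deriv_span n f (deg_le n (Suc K * (length hs * d))) (reduced n L hs)"
  proof (rule mon_deriv_span_image[OF flinear_comp[OF flinear_lc_mult flinear_lc_mult], rotated])
    fix \<beta> \<delta>' assume \<beta>: "\<beta> \<in> deg_le n d" and "\<delta>' \<in> {..<\<delta>}"
    from lc_mult_in_span[OF L hs'(1) less] \<open>\<delta>' \<in> {..<\<delta>}\<close>
    have "xmon \<beta> (lc_mult L hs' (lc_mult L (rep_list hs K) (pder n \<delta>' f)))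
        \<in> mon_deriv_span n f (deg_le n (d + (K * (length hs * d) + length hs' * d))) (reduced n L hs)"
      by (intro mon_deriv_span_xmon[rotated] deg_le_add[OF \<beta>]) auto
    moreover have "d + (K * (length hs * d) + length hs' * d) = Suc K * (length hs * d)"
      by (simp add: algebra_simps flip: hs'(2))
    ultimately show "lc_mult L (rep_list hs K) (lc_mult L hs' (xmon \<beta> (pder n \<delta>' f)))
        \<in> mon_deriv_span n f (deg_le n (Suc K * (length hs * d))) (reduced n L hs)"
      by (simp add: lc_mult_xmon lc_mult_commute[of _ "rep_list hs K"])
  qed
  then show ?thesis unfolding hs'_def lc_mult_rep_list_Suc[OF i(1)] .
qed

text \<open>Every \<open>\<delta>\<close> outside the box of \<open>reduced\<close> is rewritten into strictly smaller ones at the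
  price of one factor \<open>lc\<^sub>i\<close> and \<open>d\<close> in the coefficient degree, so \<open>mdeg n \<delta> + 1\<close> rounds of
  the product of all leading coefficients suffice.\<close>
lemma lc_mult_pder_reduced:
  assumes L: "annihilators n f L d" and hs: "set hs \<subseteq> {..<n}"
  shows "\<delta> \<in> supported n hs \<Longrightarrow> mdeg n \<delta> < K \<Longrightarrow> lc_mult L (rep_list hs K) (pder n \<delta> f)
           \<in> mon_deriv_span n f (deg_le n (K * (length hs * d))) (reduced n L hs)"
proof (induction "mdeg n \<delta>" arbitrary: \<delta> K rule: less_induct)
  case less
  have \<delta>: "\<delta> \<in> expvecs n" using less.prems(1) by (simp add: supported_def)
  show ?case
  proof (cases "\<delta> \<in> reduced n L hs")
    case True
    have "set (rep_list hs K) \<subseteq> {..<n}" using set_rep_list hs by (rule order_trans)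
    from lc_mult_in_span[OF L this pder_in_span[OF zero_in_deg_le[of n 0] True]]
    show ?thesis by (simp add: length_rep_list algebra_simps)
  next
    case False
    then obtain i where i: "i \<in> set hs" "op_order (L i) \<le> \<delta> i"
      using less.prems(1) by (auto simp: reduced_def not_less)
    obtain K' where K: "K = Suc K'" using less.prems(2) by (cases K) auto
    have "lc_mult L (rep_list hs K') (pder n \<delta>' f)
        \<in> mon_deriv_span n f (deg_le n (K' * (length hs * d))) (reduced n L hs)" if "\<delta>' < \<delta>" for \<delta>'
      using less.hyps[OF _ supported_less[OF less.prems(1) that]] mdeg_strict_mono[OF \<delta> that]
        less.prems(2) K by simp
    from lc_mult_pder_reduce_step[OF L hs i \<delta> this] show ?thesis unfolding K .
  qed
qed

section \<open>The operators \<open>T\<close> and \<open>D\<close>\<close>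

definition x12_exps :: "nat \<Rightarrow> nat \<Rightarrow> (nat \<Rightarrow> nat) set" where
  "x12_exps n J = {\<beta> \<in> expvecs n. (\<forall>v. 2 \<le> v \<longrightarrow> \<beta> v = 0) \<and> \<beta> 0 \<le> J \<and> \<beta> 1 \<le> J}"

definition supported_deg_le :: "nat \<Rightarrow> nat list \<Rightarrow> nat \<Rightarrow> (nat \<Rightarrow> nat) set" where
  "supported_deg_le n hs G = {\<delta> \<in> supported n hs. mdeg n \<delta> \<le> G}"

definition box_exps :: "nat \<Rightarrow> nat \<Rightarrow> nat \<Rightarrow> (nat \<Rightarrow> nat) set" where
  "box_exps n X Z = {\<beta> \<in> expvecs n. \<beta> 0 \<le> X \<and> \<beta> 1 \<le> X \<and> (\<forall>v. 2 \<le> v \<longrightarrow> \<beta> v \<le> Z)}"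

lemma x12_exps_dec: "\<beta> \<in> x12_exps n J \<Longrightarrow> \<beta>(j := \<beta> j - 1) \<in> x12_exps n J"
proof -
  assume b: "\<beta> \<in> x12_exps n J"
  have le: "\<beta>(j := \<beta> j - 1) \<le> \<beta>" by (simp add: le_fun_def)
  have "\<beta>(j := \<beta> j - 1) \<in> expvecs n" using expvecs_le[OF _ le] b by (simp add: x12_exps_def)
  then show ?thesis using b le_funD[OF le] unfolding x12_exps_def by (auto intro: order_trans)
qed

lemma x12_exps_mono: "J \<le> J' \<Longrightarrow> x12_exps n J \<subseteq> x12_exps n J'"
  by (auto simp: x12_exps_def)

lemma supported_deg_le_mono: "G \<le> G' \<Longrightarrow> supported_deg_le n hs G \<subseteq> supported_deg_le n hs G'"
  by (auto simp: supported_deg_le_def)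

lemma supported_deg_le_upd:
  assumes "j \<in> set hs" "j < n" "\<delta> \<in> supported_deg_le n hs G"
  shows "\<delta>(j := \<delta> j + 1) \<in> supported_deg_le n hs (G + 1)"
proof -
  have "\<delta>(j := \<delta> j + 1) \<in> expvecs n"
    using assms(2,3) by (auto simp: supported_deg_le_def supported_def expvecs_def)
  moreover have "mdeg n (\<delta>(j := \<delta> j + 1)) = mdeg n \<delta> + 1"
    unfolding unit_exp_upd mdeg_add mdeg_unit_exp[OF assms(2)] ..
  ultimately show ?thesis using assms by (auto simp: supported_deg_le_def supported_def)
qed

lemma Top_in_span:
  assumes n: "2 \<le> n" and hs: "0 \<in> set hs" "1 \<in> set hs"
    and g: "g \<in> mon_deriv_span n f (x12_exps n J) (supported_deg_le n hs G)"
  shows "Top g \<in> mon_deriv_span n f (x12_exps n (J + 1)) (supported_deg_le n hs (G + 1))"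
proof -
  have dvar: "dvar j g \<in> mon_deriv_span n f (x12_exps n J) (supported_deg_le n hs (G + 1))"
    if "j \<in> set hs" "j < n" for j
  proof (rule mon_deriv_span_dvar[OF that(2) _ _ g])
    show "\<beta> \<in> x12_exps n J \<and> \<beta>(j := \<beta> j - 1) \<in> x12_exps n J" if "\<beta> \<in> x12_exps n J" for \<beta>
      using that x12_exps_dec by blast
    show "\<delta> \<in> supported_deg_le n hs (G + 1) \<and> \<delta>(j := \<delta> j + 1) \<in> supported_deg_le n hs (G + 1)"
      if "\<delta> \<in> supported_deg_le n hs G" for \<delta>
      using that supported_deg_le_upd[OF \<open>j \<in> set hs\<close> \<open>j < n\<close> that]
        supported_deg_le_mono[of G "G + 1" n hs] by auto
  qed
  have xmon: "xmon (unit_exp j) x \<in> mon_deriv_span n f (x12_exps n (J + 1)) (supported_deg_le n hs (G + 1))"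
    if "j < 2" "x \<in> mon_deriv_span n f (x12_exps n J) (supported_deg_le n hs (G + 1))" for j x
  proof (rule mon_deriv_span_xmon[OF _ that(2)])
    show "unit_exp j + \<beta> \<in> x12_exps n (J + 1)" if "\<beta> \<in> x12_exps n J" for \<beta>
      using that \<open>j < 2\<close> n by (auto simp: x12_exps_def unit_exp_def expvecs_def)
  qed
  show ?thesis unfolding Top_eq_xmon
    using n hs by (intro fs.span_diff xmon dvar) auto
qed

lemma Top_pow_in_span:
  assumes "2 \<le> n" "0 \<in> set hs" "1 \<in> set hs"
    and "g \<in> mon_deriv_span n f (x12_exps n 0) (supported_deg_le n hs G)"
  shows "(Top ^^ j) g \<in> mon_deriv_span n f (x12_exps n j) (supported_deg_le n hs (G + j))"
proof (induction j)
  case (Suc j)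
  then show ?case using Top_in_span[OF assms(1-3) Suc] by simp
qed (simp add: assms(4))

lemma D12_pow_eq_pder:
  assumes "2 \<le> n"
  shows "(D12 ^^ l) g = pder n ((\<lambda>_. 0)(0 := l, 1 := l)) (g :: (nat \<Rightarrow> nat) \<Rightarrow> 'a::comm_semiring_1)"
proof (induction l)
  case (Suc l)
  have "(D12 ^^ Suc l) g = dvar 0 (dvar 1 (pder n ((\<lambda>_. 0)(0 := l, 1 := l)) g))"
    by (simp only: funpow.simps(2) comp_apply Suc D12_def)
  also have "\<dots> = pder n ((((\<lambda>_. 0)(0 := l, 1 := l))(1 := l + 1))(0 := l + 1)) g"
    using assms by (simp add: dvar_pder)
  also have "(((\<lambda>_. 0::nat)(0 := l, 1 := l))(1 := l + 1))(0 := l + 1) = (\<lambda>_. 0)(0 := Suc l, 1 := Suc l)"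
    by (auto simp: fun_eq_iff)
  finally show ?case .
qed (simp add: fun_upd_def)

lemma D12_pow_in_span:
  assumes n: "2 \<le> n"
  shows "(D12 ^^ l) f \<in> mon_deriv_span n f (x12_exps n 0) (supported_deg_le n [0, 1] (2 * l))"
proof -
  define \<delta> :: "nat \<Rightarrow> nat" where "\<delta> = (\<lambda>_. 0)(0 := l, 1 := l)"
  have "\<delta> v = (if v = 0 then l else 0) + (if v = 1 then l else 0)" for v by (simp add: \<delta>_def)
  then have "mdeg n \<delta> = (\<Sum>v<n. if v = 0 then l else 0) + (\<Sum>v<n. if v = 1 then l else 0)"
    unfolding mdeg_def by (simp add: sum.distrib)
  then have "mdeg n \<delta> = 2 * l" using n by (simp add: sum.delta)
  then have "\<delta> \<in> supported_deg_le n [0, 1] (2 * l)"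
    using n by (auto simp: supported_deg_le_def supported_def expvecs_def \<delta>_def)
  then show ?thesis
    unfolding D12_pow_eq_pder[OF n] \<delta>_def[symmetric] by (intro pder_in_span) (simp add: x12_exps_def expvecs_def)
qed

lemma dvar_pow_in_span:
  fixes f :: "(nat \<Rightarrow> nat) \<Rightarrow> 'a::field"
  assumes h: "h \<in> {2..<n}"
  shows "(dvar h ^^ l) f \<in> mon_deriv_span n f (x12_exps n 0) (supported_deg_le n [0, 1, h] (2 * l))"
proof -
  define \<delta> :: "nat \<Rightarrow> nat" where "\<delta> = (\<lambda>_. 0)(h := l)"
  have "mdeg n \<delta> = l" using h by (simp add: mdeg_def \<delta>_def sum.delta)
  then have "\<delta> \<in> supported_deg_le n [0, 1, h] (2 * l)"
    using h by (auto simp: supported_deg_le_def supported_def expvecs_def \<delta>_def)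
  moreover have "(dvar h ^^ l) f = pder n \<delta> f"
    using h funpow_dvar_eq_pder[of h n l f] by (simp add: \<delta>_def)
  ultimately show ?thesis by (simp add: pder_in_span x12_exps_def expvecs_def)
qed

lemma xvar12_pow_eq_xmon: "((xvar 0 \<circ> xvar 1) ^^ i) g = xmon (\<lambda>v. if v < 2 then i else 0) g"
proof (induction i)
  case (Suc i)
  have "((xvar 0 \<circ> xvar 1) ^^ Suc i) g = xvar 0 (xvar 1 (((xvar 0 \<circ> xvar 1) ^^ i) g))"
    by (simp only: funpow.simps(2) comp_apply)
  also have "\<dots> = xmon (unit_exp 0 + (unit_exp 1 + (\<lambda>v. if v < 2 then i else 0))) g"
    by (subst Suc.IH) (simp only: xvar_eq_xmon xmon_add)
  also have "unit_exp 0 + (unit_exp 1 + (\<lambda>v. if v < 2 then i else 0)) = (\<lambda>v. if v < 2 then Suc i else 0)"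
    by (auto simp: unit_exp_def fun_eq_iff)
  finally show ?case .
qed (simp add: fun_eq_iff)

lemma basis_act_eq_xmon:
  "basis_act D (i, k, j, l) g = xmon ((\<lambda>v. if v < 2 then i else 0) + k) ((Top ^^ j) ((D ^^ l) g))"
  unfolding basis_act_def prod.case xvar12_pow_eq_xmon xmon_add ..

lemma lc_mult_in_box_span:
  assumes L: "annihilators n f L d" and hs: "set hs \<subseteq> {..<n}"
    and g: "g \<in> mon_deriv_span n f (x12_exps n J) (supported_deg_le n hs G)"
  defines "Y \<equiv> (G + 1) * (length hs * d)"
  shows "lc_mult L (rep_list hs (G + 1)) g \<in> mon_deriv_span n f (box_exps n (J + Y) Y) (reduced n L hs)"
proof (rule mon_deriv_span_image[OF flinear_lc_mult _ g])
  fix \<beta> \<delta> assume \<beta>: "\<beta> \<in> x12_exps n J" and \<delta>: "\<delta> \<in> supported_deg_le n hs G"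
  then have "\<delta> \<in> supported n hs" "mdeg n \<delta> < G + 1" by (simp_all add: supported_deg_le_def)
  from lc_mult_pder_reduced[OF L hs this]
  have "lc_mult L (rep_list hs (G + 1)) (pder n \<delta> f) \<in> mon_deriv_span n f (deg_le n Y) (reduced n L hs)"
    unfolding Y_def .
  then have "xmon \<beta> (lc_mult L (rep_list hs (G + 1)) (pder n \<delta> f))
      \<in> mon_deriv_span n f (box_exps n (J + Y) Y) (reduced n L hs)"
  proof (rule mon_deriv_span_xmon[rotated])
    fix \<gamma> assume "\<gamma> \<in> deg_le n Y"
    then have "\<gamma> \<in> expvecs n" "\<And>v. \<gamma> v \<le> Y"
      using le_mdeg[of \<gamma> n] by (auto simp: deg_le_def intro: order_trans)
    then show "\<beta> + \<gamma> \<in> box_exps n (J + Y) Y"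
      using \<beta> by (auto simp: box_exps_def x12_exps_def expvecs_def add_mono)
  qed
  then show "lc_mult L (rep_list hs (G + 1)) (xmon \<beta> (pder n \<delta> f))
      \<in> mon_deriv_span n f (box_exps n (J + Y) Y) (reduced n L hs)"
    by (simp add: lc_mult_xmon)
qed

definition tail_exps :: "nat \<Rightarrow> nat \<Rightarrow> (nat \<Rightarrow> nat) set" where
  "tail_exps n B = {k \<in> expvecs n. k 0 = 0 \<and> k 1 = 0 \<and> (\<forall>v. k v \<le> B)}"

lemma lc_mult_basis_act_in_span:
  fixes D :: "((nat \<Rightarrow> nat) \<Rightarrow> 'a::field) \<Rightarrow> (nat \<Rightarrow> nat) \<Rightarrow> 'a"
  assumes n: "2 \<le> n" and L: "annihilators n f L d"
    and hs: "set hs \<subseteq> {..<n}" "0 \<in> set hs" "1 \<in> set hs"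
    and D: "\<And>l. (D ^^ l) f \<in> mon_deriv_span n f (x12_exps n 0) (supported_deg_le n hs (2 * l))"
    and t: "i \<le> a" "k \<in> tail_exps n B" "j \<le> b" "l \<le> b"
  defines "Y \<equiv> (3 * b + 1) * (length hs * d)"
  shows "lc_mult L (rep_list hs (3 * b + 1)) (basis_act D (i, k, j, l) f)
    \<in> mon_deriv_span n f (box_exps n (a + b + Y) (B + Y)) (reduced n L hs)"
proof -
  have "(Top ^^ j) ((D ^^ l) f) \<in> mon_deriv_span n f (x12_exps n j) (supported_deg_le n hs (2 * l + j))"
    by (rule Top_pow_in_span[OF n hs(2,3) D])
  then have "(Top ^^ j) ((D ^^ l) f) \<in> mon_deriv_span n f (x12_exps n b) (supported_deg_le n hs (3 * b))"
    by (rule mon_deriv_span_mono[rotated 2])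
      (use t in \<open>auto intro!: x12_exps_mono supported_deg_le_mono\<close>)
  from lc_mult_in_box_span[OF L hs(1) this]
  have "lc_mult L (rep_list hs (3 * b + 1)) ((Top ^^ j) ((D ^^ l) f))
      \<in> mon_deriv_span n f (box_exps n (b + Y) Y) (reduced n L hs)"
    by (simp add: Y_def)
  then have "xmon ((\<lambda>v. if v < 2 then i else 0) + k) (lc_mult L (rep_list hs (3 * b + 1)) ((Top ^^ j) ((D ^^ l) f)))
      \<in> mon_deriv_span n f (box_exps n (a + b + Y) (B + Y)) (reduced n L hs)"
  proof (rule mon_deriv_span_xmon[rotated])
    fix \<beta> assume \<beta>: "\<beta> \<in> box_exps n (b + Y) Y"
    have "((\<lambda>v. if v < 2 then i else 0) + k + \<beta>) v \<le> B + Y" if "2 \<le> v" for v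
      using t(2) \<beta> that by (simp add: tail_exps_def box_exps_def add_mono)
    then show "(\<lambda>v. if v < 2 then i else 0) + k + \<beta> \<in> box_exps n (a + b + Y) (B + Y)"
      using t n \<beta> by (auto simp: box_exps_def tail_exps_def expvecs_def)
  qed
  then show ?thesis by (simp add: basis_act_eq_xmon lc_mult_xmon)
qed

section \<open>Counting\<close>

lemma pow_add_le_twice_pow:
  fixes P Y m :: nat
  assumes P: "P > 0" and hP: "2 * m * Y \<le> P"
  shows "(P + Y) ^ m \<le> 2 * P ^ m"
proof -
  have Pr: "real P > 0" using P by simp
  have x: "real Y / real P \<ge> 0" by simp
  have "1 + real Y / real P \<le> exp (real Y / real P)" by (rule exp_ge_add_one_self)
  then have "(1 + real Y / real P) ^ m \<le> exp (real Y / real P) ^ m"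
    by (intro power_mono) (use x in auto)
  also have "\<dots> = exp (real m * (real Y / real P))" by (rule exp_of_nat_mult[symmetric])
  also have "\<dots> \<le> 2"
  proof -
    have "real m * (real Y / real P) = real (m * Y) / real P" by simp
    also have "\<dots> \<le> 1 / 2"
    proof -
      have "real (2 * m * Y) \<le> real P" using hP by (simp only: of_nat_le_iff)
      then show ?thesis using Pr by (simp add: divide_le_eq)
    qed
    finally have "norm (real m * (real Y / real P)) \<le> 1/2" by simp
    from exp_bound_half[OF this] show ?thesis by simp
  qed
  finally have b: "(1 + real Y / real P) ^ m \<le> 2" .
  have e: "real P + real Y = real P * (1 + real Y / real P)" using Pr by (simp add: field_simps)
  have "real ((P + Y) ^ m) = (real P + real Y) ^ m" by simp
  also have "\<dots> = real P ^ m * (1 + real Y / real P) ^ m" unfolding e by (rule power_mult_distrib)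
  also have "\<dots> \<le> real P ^ m * 2" using b by (intro mult_left_mono) auto
  also have "\<dots> = real (2 * P ^ m)" by simp
  finally show ?thesis by (simp only: of_nat_le_iff)
qed

lemma linear_relation_of_dependent_image:
  assumes I: "finite I" and inj: "inj_on w I" and dep: "fs.dependent (w ` I)"
  shows "\<exists>c. (\<forall>t. c t \<noteq> 0 \<longrightarrow> t \<in> I) \<and> c \<noteq> (\<lambda>_. 0) \<and> (\<Sum>t\<in>I. fscale (c t) (w t)) = 0"
proof -
  obtain T U where T: "T \<subseteq> w ` I" "(\<Sum>v\<in>T. fscale (U v) v) = 0" "\<exists>v\<in>T. U v \<noteq> 0"
    using dep unfolding fs.dependent_explicit by blast
  define c where "c t = (if t \<in> I \<and> w t \<in> T then U (w t) else 0)" for t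
  define I' where "I' = {t \<in> I. w t \<in> T}"
  have im: "w ` I' = T" using T(1) by (auto simp: I'_def)
  have inj': "inj_on w I'" using inj by (rule inj_on_subset) (auto simp: I'_def)
  have "(\<Sum>t\<in>I. fscale (c t) (w t)) = (\<Sum>t\<in>I'. fscale (U (w t)) (w t))"
    using I by (intro sum.mono_neutral_cong_right) (auto simp: I'_def c_def)
  also have "\<dots> = (\<Sum>v\<in>T. fscale (U v) v)"
    unfolding im[symmetric] by (rule sum.reindex[OF inj', symmetric, unfolded comp_def])
  finally have "(\<Sum>t\<in>I. fscale (c t) (w t)) = 0" using T(2) by simp
  moreover obtain t where "t \<in> I" "w t \<in> T" "U (w t) \<noteq> 0" using T(1,3) by blast
  then have "c \<noteq> (\<lambda>_. 0)" by (auto simp: c_def fun_eq_iff)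
  moreover have "\<forall>t. c t \<noteq> 0 \<longrightarrow> t \<in> I" by (simp add: c_def)
  ultimately show ?thesis by blast
qed

lemma exists_linear_relation:
  fixes w :: "'t \<Rightarrow> 'b \<Rightarrow> 'a::field"
  assumes I: "finite I" and S: "finite S" "card S < card I"
    and span: "\<And>t. t \<in> I \<Longrightarrow> w t \<in> fs.span S"
  shows "\<exists>c. (\<forall>t. c t \<noteq> 0 \<longrightarrow> t \<in> I) \<and> c \<noteq> (\<lambda>_. 0) \<and> (\<Sum>t\<in>I. fscale (c t) (w t)) = 0"
proof (cases "inj_on w I")
  case True
  have "fs.dependent (w ` I)"
  proof (rule ccontr)
    assume "\<not> fs.dependent (w ` I)"
    then have "card (w ` I) \<le> card S" using fs.independent_span_bound[OF S(1)] span by blast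
    then show False using card_image[OF True] S(2) by simp
  qed
  then show ?thesis by (rule linear_relation_of_dependent_image[OF I True])
next
  case False
  then obtain t1 t2 where t: "t1 \<in> I" "t2 \<in> I" "t1 \<noteq> t2" "w t1 = w t2" by (auto simp: inj_on_def)
  define c :: "'t \<Rightarrow> 'a" where "c t = (if t = t1 then 1 else if t = t2 then -1 else 0)" for t
  have "(\<Sum>t\<in>I. fscale (c t) (w t)) = (\<Sum>t\<in>{t1, t2}. fscale (c t) (w t))"
    using I t by (intro sum.mono_neutral_right) (auto simp: c_def)
  also have "\<dots> = 0" using t by (simp add: c_def fscale_def fun_eq_iff)
  finally have "(\<Sum>t\<in>I. fscale (c t) (w t)) = 0" .
  moreover have "c \<noteq> (\<lambda>_. 0)" "\<forall>t. c t \<noteq> 0 \<longrightarrow> t \<in> I" using t by (auto simp: c_def fun_eq_iff)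
  ultimately show ?thesis by blast
qed

lemma card_box_exps:
  assumes n: "2 \<le> n"
  shows "finite (box_exps n X Z)" "card (box_exps n X Z) \<le> (X + 1) ^ 2 * (Z + 1) ^ (n - 2)"
proof -
  define T where "T v = (if v < 2 then {..X} else {..Z})" for v :: nat
  have "\<beta> v \<in> T v" if "\<beta> \<in> box_exps n X Z" "v \<in> {..<n}" for \<beta> v
    using that by (cases "v < 2") (auto simp: box_exps_def T_def dest!: less_2_cases)
  moreover have "\<beta> v = 0" if "\<beta> \<in> box_exps n X Z" "v \<notin> {..<n}" for \<beta> v
    using that by (simp add: box_exps_def expvecs_def)
  moreover have "finite (T v)" for v by (simp add: T_def)
  ultimately have box: "finite (box_exps n X Z)" "card (box_exps n X Z) \<le> (\<Prod>v\<in>{..<n}. card (T v))"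
    using card_funs_le[of "{..<n}" T "box_exps n X Z"] by simp_all
  have "{..<n} = {..<2} \<union> {2..<n}" using n by auto
  moreover have "(\<Prod>v\<in>{..<2} \<union> {2..<n}. card (T v)) = (\<Prod>v\<in>{..<2}. card (T v)) * (\<Prod>v\<in>{2..<n}. card (T v))"
    by (rule prod.union_disjoint) auto
  ultimately have "(\<Prod>v\<in>{..<n}. card (T v)) = (\<Prod>v\<in>{..<2}. card (T v)) * (\<Prod>v\<in>{2..<n}. card (T v))"
    by simp
  also have "\<dots> = (X + 1) ^ 2 * (Z + 1) ^ (n - 2)"
    by (simp add: T_def lessThan_nat_numeral power2_eq_square)
  finally show "finite (box_exps n X Z)" "card (box_exps n X Z) \<le> (X + 1) ^ 2 * (Z + 1) ^ (n - 2)"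
    using box by simp_all
qed

lemma card_reduced:
  assumes "\<And>i. i \<in> set hs \<Longrightarrow> op_order (L i) \<le> R"
  shows "finite (reduced n L hs)" "card (reduced n L hs) \<le> R ^ length hs"
proof -
  have "\<delta> i \<in> {..<R}" if "\<delta> \<in> reduced n L hs" "i \<in> set hs" for \<delta> i
    using that assms[of i] by (auto simp: reduced_def)
  moreover have "\<delta> v = 0" if "\<delta> \<in> reduced n L hs" "v \<notin> set hs" for \<delta> v
    using that by (simp add: reduced_def supported_def)
  ultimately have red: "finite (reduced n L hs)" "card (reduced n L hs) \<le> R ^ card (set hs)"
    using card_funs_le[of "set hs" "\<lambda>_. {..<R}" "reduced n L hs"] by simp_all
  have "R ^ card (set hs) \<le> R ^ length hs"
    by (cases "R = 0") (simp_all add: power_increasing card_length, simp add: card_length power_0_left)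
  with red show "finite (reduced n L hs)" "card (reduced n L hs) \<le> R ^ length hs" by simp_all
qed

lemma card_mon_derivs:
  assumes "finite A" "finite \<Gamma>"
  shows "finite (mon_derivs n f A \<Gamma>) \<and> card (mon_derivs n f A \<Gamma>) \<le> card A * card \<Gamma>"
proof -
  have e: "mon_derivs n f A \<Gamma> = (\<lambda>(\<beta>, \<delta>). xmon \<beta> (pder n \<delta> f)) ` (A \<times> \<Gamma>)"
    by (auto simp: mon_derivs_def)
  show ?thesis unfolding e using assms
    by (metis card_cartesian_product card_image_le finite_SigmaI finite_imageI)
qed

lemma card_tail_exps:
  shows "finite (tail_exps n B) \<and> (B + 1) ^ (n - 2) \<le> card (tail_exps n B)"
proof -
  have fin: "finite (tail_exps n B)"
    by (rule card_funs_le(1)[of "{..<n}" "\<lambda>_. {..B}"]) (auto simp: tail_exps_def expvecs_def)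
  define e where "e = (\<lambda>g::nat \<Rightarrow> nat. \<lambda>v. if v \<in> {2..<n} then g v else 0)"
  have inj: "inj_on e (PiE {2..<n} (\<lambda>_. {..B}))"
  proof (rule inj_onI)
    fix x y assume x: "x \<in> PiE {2..<n} (\<lambda>_. {..B})" and y: "y \<in> PiE {2..<n} (\<lambda>_. {..B})" and h: "e x = e y"
    show "x = y"
    proof (rule PiE_ext[OF x y])
      fix v assume "v \<in> {2..<n}" then show "x v = y v" using fun_cong[OF h, of v] by (simp add: e_def)
    qed
  qed
  have im: "e ` PiE {2..<n} (\<lambda>_. {..B}) \<subseteq> tail_exps n B"
    by (auto simp: e_def tail_exps_def expvecs_def PiE_def Pi_def)
  have "(B + 1) ^ (n - 2) = card (PiE {2..<n} (\<lambda>_. {..B::nat}))" by (simp add: card_PiE)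
  also have "\<dots> \<le> card (tail_exps n B)" by (rule card_inj_on_le[OF inj im fin])
  finally show ?thesis using fin by simp
qed

text \<open>\<open>a\<close> bounds the degree in \<open>x\<^sub>1x\<^sub>2\<close>, \<open>B\<close> the exponents of \<open>x\<^sub>3,\<dots>,x\<^sub>n\<close>, \<open>b\<close> the powers of \<open>T\<close>
  and \<open>D\<close>; \<open>Y\<close> is the degree added by \<open>3b + 1\<close> rounds of leading coefficients.  \<open>B\<close> is so
  large compared to \<open>Y\<close> that \<open>(B + Y + 1)\<^sup>m \<le> 2 (B + 1)\<^sup>m\<close>, and the first inequality says that
  there are more candidate operators than spanning elements.\<close>
lemma parameter_choice:
  fixes P d h m a b B Y :: nat
  assumes h: "h \<le> 3" and P: "1 \<le> P"
    and b_eq: "b = 80 * P * (d + 1)" and Y_eq: "Y = (3 * b + 1) * (h * d)"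
    and a_eq: "a = b + Y" and B_eq: "B = 2 * m * Y"
  shows "(a + b + Y + 1) ^ 2 * (B + Y + 1) ^ m * P < (a + 1) * (B + 1) ^ m * (b + 1) ^ 2"
    and "a \<le> 729 * P * (d + 1) ^ 2" and "B \<le> 2 * m * a" and "2 * b \<le> 160 * P * (d + 1)"
proof -
  have "(3 * b + 1) * (h * d) \<le> (3 * b + 3) * (3 * d)" using h by (intro mult_mono) auto
  then have a: "a + 1 \<le> 9 * (b + 1) * (d + 1)" by (simp add: a_eq Y_eq algebra_simps)
  have "8 * (a + 1) * P \<le> 72 * (b + 1) * (P * (d + 1))"
    using mult_le_mono1[OF a, of "8 * P"] by (simp add: algebra_simps)
  also have "\<dots> < (b + 1) * (b + 1)"
    using mult_strict_left_mono[of "72 * (P * (d + 1))" "b + 1" "b + 1"] by (simp add: b_eq algebra_simps)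
  finally have key: "8 * (a + 1) * P < (b + 1) ^ 2" by (simp add: power2_eq_square)
  have "(B + Y + 1) ^ m \<le> 2 * (B + 1) ^ m"
    using pow_add_le_twice_pow[of "B + 1" m Y] by (simp add: B_eq algebra_simps)
  moreover have "(a + b + Y + 1) ^ 2 \<le> 4 * (a + 1) ^ 2"
  proof -
    have "(a + b + Y + 1) ^ 2 \<le> (2 * (a + 1)) ^ 2" by (rule power_mono) (simp_all add: a_eq)
    also have "\<dots> = 4 * (a + 1) ^ 2" by (simp add: power2_eq_square)
    finally show ?thesis .
  qed
  ultimately have "(a + b + Y + 1) ^ 2 * (B + Y + 1) ^ m * P \<le> (4 * (a + 1) ^ 2) * (2 * (B + 1) ^ m) * P"
    by (intro mult_mono) simp_all
  also have "\<dots> = ((a + 1) * (B + 1) ^ m) * (8 * (a + 1) * P)" by (simp add: power2_eq_square algebra_simps)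
  also have "\<dots> < ((a + 1) * (B + 1) ^ m) * (b + 1) ^ 2" using key by (intro mult_strict_left_mono) auto
  finally show "(a + b + Y + 1) ^ 2 * (B + Y + 1) ^ m * P < (a + 1) * (B + 1) ^ m * (b + 1) ^ 2"
    by (simp add: algebra_simps)
  have "b + 1 \<le> 81 * P * (d + 1)" using P by (simp add: b_eq)
  then have "a + 1 \<le> 9 * (81 * P * (d + 1)) * (d + 1)" using a by (meson le_trans mult_le_mono1 mult_le_mono2)
  then show "a \<le> 729 * P * (d + 1) ^ 2" by (simp add: power2_eq_square algebra_simps)
  show "B \<le> 2 * m * a" "2 * b \<le> 160 * P * (d + 1)" by (simp_all add: B_eq a_eq b_eq)
qed

lemma card_mon_derivs_less_candidates:
  fixes f :: "(nat \<Rightarrow> nat) \<Rightarrow> 'a::field"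
  assumes n: "2 \<le> n" and hs: "length hs \<le> 3" and ord: "\<And>i. i \<in> set hs \<Longrightarrow> op_order (L i) \<le> r"
    and b: "b = 80 * (r + 1) ^ length hs * (d + 1)" and Y: "Y = (3 * b + 1) * (length hs * d)"
    and a: "a = b + Y" and B: "B = 2 * (n - 2) * Y"
  defines "S \<equiv> mon_derivs n f (box_exps n (a + b + Y) (B + Y)) (reduced n L hs)"
  shows "finite S" "card S < card ({..a} \<times> tail_exps n B \<times> {..b} \<times> {..b})"
proof -
  have "op_order (L i) \<le> r + 1" if "i \<in> set hs" for i using ord[OF that] by simp
  then have red: "finite (reduced n L hs)" "card (reduced n L hs) \<le> (r + 1) ^ length hs"
    using card_reduced[of hs L "r + 1" n] by blast+
  note box = card_box_exps[OF n, of "a + b + Y" "B + Y"]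
  show "finite S" using card_mon_derivs[OF box(1) red(1), of n f] by (simp add: S_def)
  have "card S \<le> card (box_exps n (a + b + Y) (B + Y)) * card (reduced n L hs)"
    using card_mon_derivs[OF box(1) red(1), of n f] by (simp add: S_def)
  also have "\<dots> \<le> (a + b + Y + 1) ^ 2 * (B + Y + 1) ^ (n - 2) * (r + 1) ^ length hs"
    by (rule mult_le_mono[OF box(2) red(2)])
  also have "\<dots> < (a + 1) * (B + 1) ^ (n - 2) * (b + 1) ^ 2"
    by (rule parameter_choice(1)[OF hs _ b Y a B]) simp
  also have "\<dots> \<le> (a + 1) * card (tail_exps n B) * (b + 1) ^ 2"
    using card_tail_exps[of n B] by (intro mult_le_mono1 mult_le_mono2) simp
  also have "\<dots> = card ({..a} \<times> tail_exps n B \<times> {..b} \<times> {..b})"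
    by (simp add: card_cartesian_product power2_eq_square algebra_simps)
  finally show "card S < card ({..a} \<times> tail_exps n B \<times> {..b} \<times> {..b})" .
qed

lemma sub_apply_vanishes:
  assumes L: "annihilators n f L d" and xs: "set xs \<subseteq> {..<n}"
    and I: "finite I" "{t. c t \<noteq> 0} \<subseteq> I"
    and rel: "(\<Sum>t\<in>I. fscale (c t) (lc_mult L xs (basis_act D t f))) = 0"
  shows "\<forall>m\<in>expvecs n. sub_apply D c f m = 0"
proof (rule lc_mult_no_zero_divisors)
  show "is_poly n (lcoeff L i) \<and> lcoeff L i \<noteq> (\<lambda>_. 0)" if "i \<in> set xs" for i
    using annihilators_lcoeff(1,2)[OF L] subsetD[OF xs that] by simp
  have "sub_apply D c f = (\<Sum>t\<in>{t. c t \<noteq> 0}. fscale (c t) (basis_act D t f))"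
    by (simp add: sub_apply_def fun_eq_iff sum_fun_apply fscale_apply)
  then have "lc_mult L xs (sub_apply D c f) = (\<Sum>t\<in>{t. c t \<noteq> 0}. fscale (c t) (lc_mult L xs (basis_act D t f)))"
    by (simp add: fsp.linear_sum[OF flinear_lc_mult] fsp.linear_scale[OF flinear_lc_mult])
  also have "\<dots> = (\<Sum>t\<in>I. fscale (c t) (lc_mult L xs (basis_act D t f)))"
    using I by (intro sum.mono_neutral_left) auto
  finally show "\<forall>m\<in>expvecs n. lc_mult L xs (sub_apply D c f) m = 0" by (simp add: rel)
qed

lemma sub_bounds_mono:
  "sub_bounds n c a1 a2 a3 \<Longrightarrow> a1 \<le> b1 \<Longrightarrow> a2 \<le> b2 \<Longrightarrow> a3 \<le> b3 \<Longrightarrow> sub_bounds n c b1 b2 b3"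
  unfolding sub_bounds_def by (meson le_trans)

lemma sub_bounds_of_support:
  assumes "\<forall>t. c t \<noteq> 0 \<longrightarrow> t \<in> {..a} \<times> tail_exps n B \<times> {..b} \<times> {..b}"
  shows "sub_bounds n c a (n * B) (2 * b)"
  unfolding sub_bounds_def
proof (intro allI impI)
  fix i k j l assume "c (i, k, j, l) \<noteq> 0"
  then have "i \<le> a" "k \<in> tail_exps n B" "j \<le> b" "l \<le> b" using assms by auto
  moreover have "mdeg n k \<le> n * B"
    using \<open>k \<in> tail_exps n B\<close> sum_mono[of "{..<n}" k "\<lambda>_. B"] by (simp add: mdeg_def tail_exps_def)
  ultimately show "i \<le> a \<and> mdeg n k \<le> n * B \<and> j + l \<le> 2 * b" by simp
qed

lemma exists_annihilator_in_subalgebra: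
  fixes f :: "(nat \<Rightarrow> nat) \<Rightarrow> 'a::field"
    and D :: "((nat \<Rightarrow> nat) \<Rightarrow> 'a) \<Rightarrow> (nat \<Rightarrow> nat) \<Rightarrow> 'a"
  assumes n: "2 \<le> n" and L: "annihilators n f L d"
    and hs: "set hs \<subseteq> {..<n}" "0 \<in> set hs" "1 \<in> set hs" "length hs \<le> 3"
    and ord: "\<And>i. i \<in> set hs \<Longrightarrow> op_order (L i) \<le> r"
    and D: "\<And>l. (D ^^ l) f \<in> mon_deriv_span n f (x12_exps n 0) (supported_deg_le n hs (2 * l))"
  defines "P \<equiv> (r + 1) ^ length hs"
  shows "\<exists>c. sub_coeffs n c \<and> c \<noteq> (\<lambda>_. 0) \<and> (\<forall>m\<in>expvecs n. sub_apply D c f m = 0) \<and>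
     sub_bounds n c (729 * P * (d + 1) ^ 2) (1458 * n ^ 2 * P * (d + 1) ^ 2) (160 * P * (d + 1))"
proof -
  define b where "b = 80 * P * (d + 1)"
  define Y where "Y = (3 * b + 1) * (length hs * d)"
  define a where "a = b + Y"
  define B where "B = 2 * (n - 2) * Y"
  define I where "I = {..a} \<times> tail_exps n B \<times> {..b} \<times> {..b}"
  have "1 \<le> P" by (simp add: P_def)
  note params = parameter_choice[OF hs(4) this b_def Y_def a_def B_def]
  define S where "S = mon_derivs n f (box_exps n (a + b + Y) (B + Y)) (reduced n L hs)"
  have "finite S" "card S < card I"
    using card_mon_derivs_less_candidates[of n hs L r b d Y a B f] n hs(4) ord
    by (simp_all add: S_def I_def b_def P_def Y_def a_def B_def)
  moreover have "finite I" using card_tail_exps[of n B] by (simp add: I_def)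
  moreover have "lc_mult L (rep_list hs (3 * b + 1)) (basis_act D t f) \<in> fs.span S" if "t \<in> I" for t
    using that lc_mult_basis_act_in_span[OF n L hs(1-3) D, of _ a _ B _ b]
    by (auto simp: I_def S_def Y_def)
  ultimately have "\<exists>c. (\<forall>t. c t \<noteq> 0 \<longrightarrow> t \<in> I) \<and> c \<noteq> (\<lambda>_. 0) \<and>
      (\<Sum>t\<in>I. fscale (c t) (lc_mult L (rep_list hs (3 * b + 1)) (basis_act D t f))) = 0"
    by (intro exists_linear_relation)
  then obtain c where c: "\<forall>t. c t \<noteq> 0 \<longrightarrow> t \<in> I" "c \<noteq> (\<lambda>_. 0)"
    and rel: "(\<Sum>t\<in>I. fscale (c t) (lc_mult L (rep_list hs (3 * b + 1)) (basis_act D t f))) = 0"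
    by blast
  have supp: "{t. c t \<noteq> 0} \<subseteq> I" using c(1) by auto
  have "set (rep_list hs (3 * b + 1)) \<subseteq> {..<n}" using set_rep_list hs(1) by (rule order_trans)
  from sub_apply_vanishes[OF L this \<open>finite I\<close> supp rel]
  have "\<forall>m\<in>expvecs n. sub_apply D c f m = 0" .
  moreover have "sub_coeffs n c"
    unfolding sub_coeffs_def using finite_subset[OF supp \<open>finite I\<close>] c(1) by (auto simp: I_def tail_exps_def)
  moreover have "sub_bounds n c (729 * P * (d + 1) ^ 2) (1458 * n ^ 2 * P * (d + 1) ^ 2) (160 * P * (d + 1))"
  proof (rule sub_bounds_mono[OF sub_bounds_of_support[OF c(1)[unfolded I_def]] params(2) _ params(4)])
    have "2 * (n - 2) * a \<le> 2 * n * (729 * P * (d + 1) ^ 2)"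
      using params(2) by (intro mult_le_mono) simp_all
    then have "B \<le> 2 * n * (729 * P * (d + 1) ^ 2)" using params(3) by (rule order_trans[rotated])
    then have "n * B \<le> n * (2 * n * (729 * P * (d + 1) ^ 2))" by (rule mult_le_mono2)
    then show "n * B \<le> 1458 * n ^ 2 * P * (d + 1) ^ 2" by (simp add: power2_eq_square algebra_simps)
  qed
  ultimately show ?thesis using c(2) by blast
qed

lemma sub_bounds_weaken:
  assumes c: "sub_bounds n c (729 * R ^ h * Dd ^ 2) (1458 * n ^ 2 * R ^ h * Dd ^ 2) (160 * R ^ h * Dd)"
    and n: "1 \<le> n" and R: "1 \<le> R" and Dd: "1 \<le> Dd" and h: "h \<le> e" "h \<le> e'"
  shows "sub_bounds n c (2000 * n ^ 2 * Dd ^ 2 * R ^ e) (2000 * n ^ 2 * Dd ^ 9 * R ^ e')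
    (2000 * n ^ 2 * Dd ^ 2 * R ^ e)"
proof -
  have R_le: "R ^ h \<le> R ^ e" "R ^ h \<le> R ^ e'" and Dd_le: "Dd ^ 2 \<le> Dd ^ 9"
    using R Dd h by (simp_all only: power_increasing)
  have "1 \<le> n ^ 2" using n by simp
  then have C: "729 \<le> 2000 * n ^ 2" "160 \<le> 2000 * n ^ 2" "1458 * n ^ 2 \<le> 2000 * n ^ 2" by linarith+
  have "(729 * R ^ h) * Dd ^ 2 \<le> (2000 * n ^ 2 * R ^ e) * Dd ^ 2"
    by (rule mult_le_mono1[OF mult_le_mono[OF C(1) R_le(1)]])
  moreover have "(1458 * n ^ 2 * R ^ h) * Dd ^ 2 \<le> (2000 * n ^ 2 * R ^ e') * Dd ^ 9"
    by (rule mult_le_mono[OF mult_le_mono[OF C(3) R_le(2)] Dd_le])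
  moreover have "(160 * R ^ h) * Dd \<le> (2000 * n ^ 2 * R ^ e) * Dd ^ 2"
    by (rule mult_le_mono[OF mult_le_mono[OF C(2) R_le(1)]]) (simp add: power2_eq_square le_square)
  ultimately have "729 * R ^ h * Dd ^ 2 \<le> 2000 * n ^ 2 * Dd ^ 2 * R ^ e"
    "1458 * n ^ 2 * R ^ h * Dd ^ 2 \<le> 2000 * n ^ 2 * Dd ^ 9 * R ^ e'"
    "160 * R ^ h * Dd \<le> 2000 * n ^ 2 * Dd ^ 2 * R ^ e"
    by (simp_all add: mult.commute mult.left_commute)
  then show ?thesis by (rule sub_bounds_mono[OF c])
qed

lemma exists_annihilator_with_bounds:
  fixes f :: "(nat \<Rightarrow> nat) \<Rightarrow> 'a::field"
    and D :: "((nat \<Rightarrow> nat) \<Rightarrow> 'a) \<Rightarrow> (nat \<Rightarrow> nat) \<Rightarrow> 'a"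
  assumes n: "2 \<le> n" and L: "annihilators n f L d" and ord: "\<forall>i<n. op_order (L i) \<le> r"
    and hs: "set hs \<subseteq> {..<n}" "0 \<in> set hs" "1 \<in> set hs" "length hs \<le> 3"
      "length hs \<le> e" "length hs \<le> e'"
    and D: "\<And>l. (D ^^ l) f \<in> mon_deriv_span n f (x12_exps n 0) (supported_deg_le n hs (2 * l))"
  shows "\<exists>c. sub_coeffs n c \<and> c \<noteq> (\<lambda>_. 0) \<and> (\<forall>m\<in>expvecs n. sub_apply D c f m = 0) \<and>
    sub_bounds n c (2000 * n ^ 2 * (d + 1) ^ 2 * (r + 1) ^ e) (2000 * n ^ 2 * (d + 1) ^ 9 * (r + 1) ^ e')
      (2000 * n ^ 2 * (d + 1) ^ 2 * (r + 1) ^ e)"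
proof -
  have "op_order (L i) \<le> r" if "i \<in> set hs" for i using ord subsetD[OF hs(1) that] by simp
  from exists_annihilator_in_subalgebra[OF n L hs(1-4) this D]
  obtain c where c: "sub_coeffs n c" "c \<noteq> (\<lambda>_. 0)" "\<forall>m\<in>expvecs n. sub_apply D c f m = 0"
    and b: "sub_bounds n c (729 * (r + 1) ^ length hs * (d + 1) ^ 2)
      (1458 * n ^ 2 * (r + 1) ^ length hs * (d + 1) ^ 2) (160 * (r + 1) ^ length hs * (d + 1))"
    by blast
  have "sub_bounds n c (2000 * n ^ 2 * (d + 1) ^ 2 * (r + 1) ^ e)
      (2000 * n ^ 2 * (d + 1) ^ 9 * (r + 1) ^ e') (2000 * n ^ 2 * (d + 1) ^ 2 * (r + 1) ^ e)"
    by (rule sub_bounds_weaken[OF b _ _ _ hs(5,6)]) (use n in simp_all)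
  with c show ?thesis by blast
qed

theorem theorem3p16:
  fixes n :: nat
  assumes "n \<ge> 2"
  shows "\<exists>C :: nat. \<forall>(f :: (nat \<Rightarrow> nat) \<Rightarrow> 'a :: field_char_0)
      (L :: nat \<Rightarrow> nat \<Rightarrow> (nat \<Rightarrow> nat) \<Rightarrow> 'a).
    is_series n f \<and> dfinite n f \<and>
    (\<forall>i<n. ore_op n (L i) \<and> L i \<noteq> (\<lambda>_ _. 0) \<and> (\<forall>m\<in>expvecs n. apply_ore i (L i) f m = 0))
    \<longrightarrow>
    (let rf = Max ((\<lambda>i. op_order (L i)) ` {..<n});
         df = Max ((\<lambda>i. op_degree n (L i)) ` {..<n})
     in
     (\<exists>c. sub_coeffs n c \<and> c \<noteq> (\<lambda>_. 0) \<and>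
          (\<forall>m\<in>expvecs n. sub_apply D12 c f m = 0) \<and>
          sub_bounds n c (C * (df + 1)^2 * (rf + 1)^2) (C * (df + 1)^9 * (rf + 1)^8)
                         (C * (df + 1)^2 * (rf + 1)^2)) \<and>
     (\<forall>h\<in>{2..<n}. \<exists>c. sub_coeffs n c \<and> c \<noteq> (\<lambda>_. 0) \<and>
          (\<forall>m\<in>expvecs n. sub_apply (dvar h) c f m = 0) \<and>
          sub_bounds n c (C * (df + 1)^2 * (rf + 1)^3) (C * (df + 1)^9 * (rf + 1)^12)
                         (C * (df + 1)^2 * (rf + 1)^3)))"
proof (intro exI[of _ "2000 * n ^ 2"] allI impI, goal_cases)
  case (1 f L)
  define rf where "rf = Max ((\<lambda>i. op_order (L i)) ` {..<n})"
  define df where "df = Max ((\<lambda>i. op_degree n (L i)) ` {..<n})"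
  have ord: "\<forall>i<n. op_order (L i) \<le> rf" unfolding rf_def by auto
  have "op_degree n (L i) \<le> df" if "i < n" for i unfolding df_def using that by auto
  then have L: "annihilators n f L df" using 1 by (simp add: annihilators_def)
  note bounded = exists_annihilator_with_bounds[OF assms L ord]
  have "\<exists>c. sub_coeffs n c \<and> c \<noteq> (\<lambda>_. 0) \<and> (\<forall>m\<in>expvecs n. sub_apply D12 c f m = 0) \<and>
      sub_bounds n c (2000 * n ^ 2 * (df + 1)^2 * (rf + 1)^2) (2000 * n ^ 2 * (df + 1)^9 * (rf + 1)^8)
        (2000 * n ^ 2 * (df + 1)^2 * (rf + 1)^2)"
    by (rule bounded[OF _ _ _ _ _ _ D12_pow_in_span[OF assms]]) (use assms in auto)
  moreover have "\<exists>c. sub_coeffs n c \<and> c \<noteq> (\<lambda>_. 0) \<and> (\<forall>m\<in>expvecs n. sub_apply (dvar h) c f m = 0) \<and>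
      sub_bounds n c (2000 * n ^ 2 * (df + 1)^2 * (rf + 1)^3) (2000 * n ^ 2 * (df + 1)^9 * (rf + 1)^12)
        (2000 * n ^ 2 * (df + 1)^2 * (rf + 1)^3)" if h: "h \<in> {2..<n}" for h
    by (rule bounded[OF _ _ _ _ _ _ dvar_pow_in_span[OF h]]) (use h in auto)
  ultimately show ?case unfolding Let_def rf_def[symmetric] df_def[symmetric] by blast
qed

end
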